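(* Let $\mathbf{k}=(k_1,\dots,k_s)$ be a sequence of positive integers with $\sum_{i=1}^s k_i=n$, and put $n_0=0$, $n_i=\sum_{j=1}^i k_j$. Let $\lambda=(\lambda_1,\dots,\lambda_n)$ be real numbers with $\lambda_1=\cdots=\lambda_{n_1}>\lambda_{n_1+1}=\cdots=\lambda_{n_2}>\cdots>\lambda_{n_{s-1}+1}=\cdots=\lambda_{n_s}$. Then there is a bijection $\phi:\mathcal{F}(\mathcal{P}_\lambda)\to\mathcal{F}(\Gamma_{\mathbf{k}})$ from the set of (nonempty) faces of the Gelfand–Cetlin polytope $\mathcal{P}_\lambda$ to the set of faces of the ladder diagram $\Gamma_{\mathbf{k}}$ such that for all faces $F,F'$ of $\mathcal{P}_\lambda$: $F\subseteq F'$ if and only if $\phi(F)\subseteq\phi(F')$, and $\dim\phi(F)=\dim F$. In particular $\phi$ is an isomorphism of face lattices preserving dimension.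
   Context: Gelfand–Cetlin polytope: let $I=\{(i,j)\in\mathbb{Z}^2: i,j\ge1,\ i+j\le n\}$ and $d=|I|=\binom n2$. With coordinates $(x_{i,j})_{(i,j)\in I}$ on $\mathbb{R}^d$ and the convention $x_{i,n+1-i}:=\lambda_i$ for $i=1,\dots,n$, $\mathcal{P}_\lambda=\{x\in\mathbb{R}^d: x_{i,j+1}\ge x_{i,j}\ge x_{i+1,j}\text{ for all }(i,j)\in I\}$. Let $Q^+$ be the infinite directed graph with vertex set $\mathbb{Z}_{\ge0}\times\mathbb{Z}_{\ge0}$ and a directed edge $((i,j),(i',j'))$ iff $(i',j')=(i,j+1)$ or $(i',j')=(i+1,j)$. Terminal vertices: $T_{\mathbf{k}}=\{(n_\ell,n-n_\ell):0\le\ell\le s\}$. The ladder diagram $\Gamma_{\mathbf{k}}$ is the induced subgraph of $Q^+$ on the vertex set $\{(a,b): a\le c,\ b\le d\text{ for some }(c,d)\in T_{\mathbf{k}}\}$. The vertex $(0,0)$ is the origin. A positive path is a shortest (directed) path in $\Gamma_{\mathbf{k}}$ from the origin to a terminal vertex. A face of $\Gamma_{\mathbf{k}}$ is a subgraph $\gamma$ whose vertex set contains all terminal vertices and which is a union of positive paths; $\mathcal{F}(\Gamma_{\mathbf{k}})$ denotes the set of faces, ordered by inclusion of subgraphs. The dimension of a face $\gamma$ is $\operatorname{rank}H_1(\gamma)$, regarding $\gamma$ as a 1-dimensional CW complex (the number of independent cycles). *)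

theory Defs
  imports "HOL-Analysis.Analysis"
begin

definition GC_index :: "nat \<Rightarrow> (nat \<times> nat) set" where
  "GC_index n = {(i,j). 1 \<le> i \<and> 1 \<le> j \<and> i + j \<le> n}"

text \<open>The ambient space R^I is realised isometrically inside real^'d via an injective
  labelling e of the index set by coordinates of 'd (other coordinates are 0).\<close>
definition GC_coord :: "nat \<Rightarrow> (nat \<Rightarrow> real) \<Rightarrow> (nat \<times> nat \<Rightarrow> 'd) \<Rightarrow> real ^ 'd \<Rightarrow> nat \<times> nat \<Rightarrow> real" where
  "GC_coord n lam e x p = (if fst p + snd p = n + 1 then lam (fst p) else x $ e p)"

definition GC_polytope :: "nat \<Rightarrow> (nat \<Rightarrow> real) \<Rightarrow> (nat \<times> nat \<Rightarrow> 'd::finite) \<Rightarrow> (real ^ 'd) set" where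
  "GC_polytope n lam e =
     {x. (\<forall>t. t \<notin> e ` GC_index n \<longrightarrow> x $ t = 0) \<and>
         (\<forall>(i,j) \<in> GC_index n.
            GC_coord n lam e x (i, j+1) \<ge> GC_coord n lam e x (i, j) \<and>
            GC_coord n lam e x (i, j) \<ge> GC_coord n lam e x (i+1, j))}"

definition nonempty_faces :: "'a::real_vector set \<Rightarrow> 'a set set" where
  "nonempty_faces P = {F. F face_of P \<and> F \<noteq> {}}"

type_synonym vtx = "nat \<times> nat"
type_synonym graph = "vtx set \<times> (vtx \<times> vtx) set"

definition partial_sum :: "nat list \<Rightarrow> nat \<Rightarrow> nat" where
  "partial_sum k l = sum_list (take l k)"

definition terminals :: "nat list \<Rightarrow> vtx set" where
  "terminals k = {(partial_sum k l, sum_list k - partial_sum k l) | l. l \<le> length k}"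

definition ladder_vertices :: "nat list \<Rightarrow> vtx set" where
  "ladder_vertices k = {(a,b). \<exists>(c,d) \<in> terminals k. a \<le> c \<and> b \<le> d}"

definition ladder_edges :: "nat list \<Rightarrow> (vtx \<times> vtx) set" where
  "ladder_edges k = {((a,b),(c,d)). (a,b) \<in> ladder_vertices k \<and> (c,d) \<in> ladder_vertices k \<and>
       ((c,d) = (a, b+1) \<or> (c,d) = (a+1, b))}"

definition ladder_walk :: "nat list \<Rightarrow> vtx list \<Rightarrow> bool" where
  "ladder_walk k p \<longleftrightarrow> p \<noteq> [] \<and> set p \<subseteq> ladder_vertices k \<and>
      (\<forall>i. i + 1 < length p \<longrightarrow> (p ! i, p ! (i+1)) \<in> ladder_edges k)"

definition path_edges :: "vtx list \<Rightarrow> (vtx \<times> vtx) set" where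
  "path_edges p = {(p ! i, p ! (i+1)) | i. i + 1 < length p}"

definition positive_path :: "nat list \<Rightarrow> vtx list \<Rightarrow> bool" where
  "positive_path k p \<longleftrightarrow> ladder_walk k p \<and> hd p = (0,0) \<and> last p \<in> terminals k \<and>
      (\<forall>q. ladder_walk k q \<and> hd q = (0,0) \<and> last q = last p \<longrightarrow> length p \<le> length q)"

definition ladder_faces :: "nat list \<Rightarrow> graph set" where
  "ladder_faces k = {(V, E). terminals k \<subseteq> V \<and>
      (\<exists>S. (\<forall>p\<in>S. positive_path k p) \<and> V = (\<Union>p\<in>S. set p) \<and> E = (\<Union>p\<in>S. path_edges p))}"

definition subgraph :: "graph \<Rightarrow> graph \<Rightarrow> bool" where
  "subgraph g h \<longleftrightarrow> fst g \<subseteq> fst h \<and> snd g \<subseteq> snd h"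

text \<open>Rank of H_1 of a finite graph viewed as 1-dimensional CW complex:
  |E| - |V| + (number of connected components).\<close>
definition num_components :: "graph \<Rightarrow> nat" where
  "num_components g = card (fst g // ((snd g \<union> (snd g)\<inverse>)\<^sup>*))"

definition graph_dim :: "graph \<Rightarrow> int" where
  "graph_dim g = int (card (snd g)) - int (card (fst g)) + int (num_components g)"

definition lambda_of_type :: "nat list \<Rightarrow> (nat \<Rightarrow> real) \<Rightarrow> bool" where
  "lambda_of_type k lam \<longleftrightarrow>
     (\<forall>l < length k. \<forall>i. partial_sum k l < i \<and> i \<le> partial_sum k (Suc l) \<longrightarrow>
          lam i = lam (partial_sum k (Suc l))) \<and>
     (\<forall>l. Suc l < length k \<longrightarrow> lam (partial_sum k (Suc l)) > lam (partial_sum k (Suc l) + 1))"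

end

(* A nonempty face of the polytope is determined by the set of inequalities tight on all of it;
   this set is attained at a point y of the face, the face is then {z. every inequality tight at
   y is tight at z}, and inclusion of faces reverses inclusion of these sets.

   To a set of tight inequalities we attach the subgraph of the grid consisting of the edges
   along the two axes and of the edges that enter a grid point across a strict inequality. For a
   point y of the polytope this graph is connected, it is the union of the positive paths it
   contains, and its cycle rank is the number of corners of y, the cells at which both
   inequalities are strict. Coordinates equal to their upper or right neighbour form blocks
   ending at a corner or at the boundary, so the directions of the face at y are parametrised by
   their values at the corners: the dimension of the face is the number of corners as well.
   Conversely, a union of positive paths is the graph of the point obtained by raising the
   coordinates above and to the left of each path by a weight, the weights of the paths ending at
   a terminal (c, n - c) adding up to lambda(c) - lambda(c + 1). *)

theory Submission
  imports Defs
begin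

section \<open>Faces of a polyhedron given by linear inequalities\<close>

lemma exists_small_positive_perturbation:
  fixes f g :: "'c \<Rightarrow> real"
  assumes "finite K" and "\<forall>c\<in>K. 0 < f c"
  shows "\<exists>d>0. \<forall>c\<in>K. 0 < f c + d * g c"
proof -
  have "\<forall>\<^sub>F d in at_right 0. 0 < f c + d * g c" if "c \<in> K" for c
  proof -
    have "((\<lambda>d. f c + d * g c) \<longlongrightarrow> f c + 0 * g c) (at_right 0)"
      by (intro tendsto_intros)
    then show ?thesis using assms(2) that by (auto dest: order_tendstoD(1))
  qed
  then have "\<forall>\<^sub>F d in at_right 0. 0 < d \<and> (\<forall>c\<in>K. 0 < f c + d * g c)"
    using assms(1) by (intro eventually_conj eventually_at_right_less eventually_ball_finite) auto
  then show ?thesis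
    using eventually_happens trivial_limit_at_right_real by blast
qed

lemma mem_open_segment_extension:
  fixes y z :: "'a::real_vector"
  assumes "0 < d" "z \<noteq> y"
  shows "y \<in> open_segment (y + d *\<^sub>R (y - z)) z"
proof -
  define w where "w = y + d *\<^sub>R (y - z)"
  have "w \<noteq> z"
  proof
    assume "w = z"
    then have "(1 + d) *\<^sub>R (y - z) = 0" unfolding w_def by (simp add: algebra_simps)
    then show False using assms by simp
  qed
  moreover have "y = (1 - d/(1+d)) *\<^sub>R w + (d/(1+d)) *\<^sub>R z"
  proof -
    have e1: "1 - d/(1+d) = 1/(1+d)" and e2: "d/(1+d) = (1/(1+d)) * d"
      using assms(1) by (simp_all add: field_simps)
    have "(1 - d/(1+d)) *\<^sub>R w + (d/(1+d)) *\<^sub>R z = (1/(1+d)) *\<^sub>R (w + d *\<^sub>R z)"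
      unfolding e1 unfolding e2 by (simp only: scaleR_add_right scaleR_scaleR)
    also have "w + d *\<^sub>R z = (1+d) *\<^sub>R y" unfolding w_def by (simp add: algebra_simps)
    finally show ?thesis using assms(1) by simp
  qed
  ultimately show ?thesis
    using assms(1) unfolding in_segment w_def[symmetric] by (intro conjI exI[of _ "d/(1+d)"]) auto
qed

locale linear_inequalities =
  fixes V :: "'a::euclidean_space set" and K :: "'c set"
    and L :: "'c \<Rightarrow> 'a \<Rightarrow> real" and b :: "'c \<Rightarrow> real"
  assumes subspace_V: "subspace V" and finite_K: "finite K" and linear_L: "\<And>c. linear (L c)"
begin

definition polyhedron :: "'a set" where
  "polyhedron = {x \<in> V. \<forall>c\<in>K. 0 \<le> L c x + b c}"

definition tight :: "'a \<Rightarrow> 'c set" where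
  "tight x = {c \<in> K. L c x + b c = 0}"

definition tight_on :: "'a set \<Rightarrow> 'c set" where
  "tight_on F = (\<Inter>z\<in>F. tight z)"

definition face_at :: "'a \<Rightarrow> 'a set" where
  "face_at y = {z \<in> polyhedron. tight y \<subseteq> tight z}"

definition face_directions :: "'a \<Rightarrow> 'a set" where
  "face_directions y = {v \<in> V. \<forall>c\<in>tight y. L c v = 0}"

lemma slack_affine_comb:
  assumes "u + v = 1"
  shows "L c (u *\<^sub>R x + v *\<^sub>R z) + b c = u * (L c x + b c) + v * (L c z + b c)"
proof -
  have "b c = u * b c + v * b c"
    using assms by (metis distrib_right mult_1)
  then show ?thesis
    by (simp add: linear_add[OF linear_L] linear_scale[OF linear_L] algebra_simps)
qed

lemma polyhedron_convex_comb:
  assumes "x \<in> polyhedron" "z \<in> polyhedron" "0 \<le> u" "0 \<le> v" "u + v = 1"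
  shows "u *\<^sub>R x + v *\<^sub>R z \<in> polyhedron"
  using assms subspace_V by (auto simp: polyhedron_def slack_affine_comb subspace_add subspace_scale)

lemma tight_subset: "tight x \<subseteq> K"
  by (auto simp: tight_def)

lemma tight_on_subset: "F \<noteq> {} \<Longrightarrow> tight_on F \<subseteq> K"
  using tight_subset by (auto simp: tight_on_def)

lemma self_mem_face_at: "y \<in> polyhedron \<Longrightarrow> y \<in> face_at y"
  by (simp add: face_at_def)

lemma tight_convex_comb:
  assumes "x \<in> polyhedron" "z \<in> polyhedron" "0 < u" "0 < v" "u + v = 1"
  shows "tight (u *\<^sub>R x + v *\<^sub>R z) = tight x \<inter> tight z"
proof -
  have "L c x + b c \<ge> 0" "L c z + b c \<ge> 0" if "c \<in> K" for c
    using assms(1,2) that by (auto simp: polyhedron_def)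
  with assms(3-5) show ?thesis
    by (auto simp: tight_def slack_affine_comb add_nonneg_eq_0_iff)
qed

lemma face_at_face_of: "face_at y face_of polyhedron"
  unfolding face_of_def
proof (intro conjI ballI impI)
  show "face_at y \<subseteq> polyhedron" by (auto simp: face_at_def)
  show "convex (face_at y)"
    unfolding convex_def face_at_def
    by (auto simp: polyhedron_convex_comb tight_def slack_affine_comb subset_iff)
next
  fix x z w assume xz: "x \<in> polyhedron" "z \<in> polyhedron" and w: "w \<in> face_at y" "w \<in> open_segment x z"
  then obtain u where u: "0 < u" "u < 1" "w = (1 - u) *\<^sub>R x + u *\<^sub>R z"
    by (auto simp: in_segment)
  then have "tight w = tight x \<inter> tight z"
    using tight_convex_comb[OF xz] by simp
  then show "x \<in> face_at y" "z \<in> face_at y"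
    using w(1) xz by (auto simp: face_at_def)
qed

lemma exists_tight_eq_tight_on:
  assumes "F \<subseteq> polyhedron" "convex F" "F \<noteq> {}"
  shows "\<exists>y\<in>F. tight y = tight_on F"
proof -
  obtain y where y: "y \<in> F" "\<And>z. z \<in> F \<Longrightarrow> card (tight y) \<le> card (tight z)"
    using assms(3) ex_has_least_nat[of "\<lambda>z. z \<in> F" _ "\<lambda>z. card (tight z)"] by blast
  have "tight y \<subseteq> tight z" if z: "z \<in> F" for z
  proof -
    define m where "m = (1/2) *\<^sub>R y + (1/2) *\<^sub>R z"
    have "m \<in> F" using assms(2) y(1) z unfolding m_def convex_def by auto
    moreover have "tight m = tight y \<inter> tight z"
      unfolding m_def using assms(1) y(1) z by (intro tight_convex_comb) auto
    moreover have "finite (tight y)"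
      using finite_K tight_subset by (rule finite_subset[rotated])
    ultimately show ?thesis
      using y(2)[of m] by (metis card_seteq inf_le1 le_inf_iff)
  qed
  then show ?thesis using y(1) by (auto simp: tight_on_def)
qed

lemma subspace_face_directions: "subspace (face_directions y)"
  using subspace_V
  by (auto simp: subspace_def face_directions_def linear_add[OF linear_L] linear_scale[OF linear_L]
      linear_0[OF linear_L])

lemma perturbation_in_face_at:
  assumes y: "y \<in> polyhedron" and v: "v \<in> face_directions y"
  shows "\<exists>d>0. y + d *\<^sub>R v \<in> face_at y"
proof -
  have "\<forall>c \<in> K - tight y. 0 < L c y + b c"
    using y by (auto simp: polyhedron_def tight_def less_le)
  then obtain d where d: "d > 0" "\<forall>c \<in> K - tight y. 0 < L c y + b c + d * L c v"
    using exists_small_positive_perturbation[of "K - tight y" "\<lambda>c. L c y + b c" "\<lambda>c. L c v"] finite_K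
    by auto
  have slack: "L c (y + d *\<^sub>R v) + b c = L c y + b c + d * L c v" for c
    by (simp add: linear_add[OF linear_L] linear_scale[OF linear_L])
  have "y + d *\<^sub>R v \<in> V"
    using y v subspace_V by (simp add: polyhedron_def face_directions_def subspace_add subspace_scale)
  moreover have "0 \<le> L c (y + d *\<^sub>R v) + b c" if "c \<in> K" for c
  proof (cases "c \<in> tight y")
    case True then show ?thesis using v by (simp add: slack face_directions_def tight_def)
  next
    case False then show ?thesis using d(2) that by (simp add: slack less_imp_le)
  qed
  moreover have "tight y \<subseteq> tight (y + d *\<^sub>R v)"
    using v by (auto simp: slack face_directions_def tight_def)
  ultimately show ?thesis
    using d(1) by (auto simp: face_at_def polyhedron_def)
qed

lemma face_of_eq_face_at:
  assumes F: "F face_of polyhedron" and y: "y \<in> F" "tight y = tight_on F"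
  shows "F = face_at y"
proof
  show "F \<subseteq> face_at y"
    using F y by (auto simp: face_at_def tight_on_def dest: face_of_imp_subset)
next
  show "face_at y \<subseteq> F"
  proof
    fix z assume z: "z \<in> face_at y"
    have yP: "y \<in> polyhedron" using F y(1) face_of_imp_subset by blast
    have zP: "z \<in> polyhedron" "tight y \<subseteq> tight z" using z by (auto simp: face_at_def)
    show "z \<in> F"
    proof (cases "z = y")
      case True then show ?thesis using y by simp
    next
      case False
      have "y - z \<in> face_directions y"
        using yP zP subspace_V
        by (auto simp: face_directions_def polyhedron_def tight_def subspace_diff
            linear_diff[OF linear_L] subset_iff)
      then obtain d where d: "d > 0" "y + d *\<^sub>R (y - z) \<in> face_at y"
        using perturbation_in_face_at[OF yP] by blast
      \<comment> \<open>\<open>y\<close> lies strictly between \<open>z\<close> and a point of the polyhedron beyond \<open>y\<close>\<close>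
      have "y \<in> open_segment (y + d *\<^sub>R (y - z)) z"
        using d(1) False by (rule mem_open_segment_extension)
      moreover have "y + d *\<^sub>R (y - z) \<in> polyhedron" using d(2) by (simp add: face_at_def)
      ultimately show "z \<in> F" using face_ofD[OF F] zP(1) y(1) by blast
    qed
  qed
qed

lemma nonempty_face_eq_face_at:
  assumes "F face_of polyhedron" "F \<noteq> {}"
  obtains y where "y \<in> F" "tight y = tight_on F" "F = face_at y"
  using exists_tight_eq_tight_on[OF face_of_imp_subset face_of_imp_convex] face_of_eq_face_at assms
  by metis

lemma tight_on_face_at: "y \<in> polyhedron \<Longrightarrow> tight_on (face_at y) = tight y"
  using self_mem_face_at by (fastforce simp: tight_on_def face_at_def)

lemma face_at_subset_iff:
  assumes "y \<in> polyhedron" "y' \<in> polyhedron"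
  shows "face_at y \<subseteq> face_at y' \<longleftrightarrow> tight y' \<subseteq> tight y"
  using assms self_mem_face_at by (auto simp: face_at_def)

lemma face_subset_iff_tight_on:
  assumes "F face_of polyhedron" "F \<noteq> {}" "F' face_of polyhedron" "F' \<noteq> {}"
  shows "F \<subseteq> F' \<longleftrightarrow> tight_on F' \<subseteq> tight_on F"
proof -
  obtain y y' where "y \<in> F" "F = face_at y" "y' \<in> F'" "F' = face_at y'"
    using nonempty_face_eq_face_at assms by metis
  moreover have "y \<in> polyhedron" "y' \<in> polyhedron"
    using calculation assms(1,3) face_of_imp_subset by blast+
  ultimately show ?thesis
    using face_at_subset_iff tight_on_face_at by metis
qed

lemma span_face_at:
  assumes y: "y \<in> polyhedron"
  shows "span ((\<lambda>z. z - y) ` face_at y) = face_directions y"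
proof
  have "z - y \<in> face_directions y" if "z \<in> face_at y" for z
    using that y subspace_V
    by (auto simp: face_at_def polyhedron_def face_directions_def tight_def subspace_diff
        linear_diff[OF linear_L] subset_iff)
  then show "span ((\<lambda>z. z - y) ` face_at y) \<subseteq> face_directions y"
    by (intro span_minimal subspace_face_directions) auto
next
  show "face_directions y \<subseteq> span ((\<lambda>z. z - y) ` face_at y)"
  proof
    fix v assume "v \<in> face_directions y"
    then obtain d where d: "d > 0" "y + d *\<^sub>R v \<in> face_at y"
      using perturbation_in_face_at[OF y] by blast
    then have "(1/d) *\<^sub>R ((y + d *\<^sub>R v) - y) \<in> span ((\<lambda>z. z - y) ` face_at y)"
      by (intro span_scale span_base imageI)
    then show "v \<in> span ((\<lambda>z. z - y) ` face_at y)"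
      using d(1) by simp
  qed
qed

lemma aff_dim_face_at:
  assumes "y \<in> polyhedron"
  shows "aff_dim (face_at y) = int (dim (face_directions y))"
proof -
  have "y \<in> affine hull face_at y"
    using self_mem_face_at[OF assms] by (simp add: hull_inc)
  then have "aff_dim (face_at y) = int (dim ((\<lambda>z. z - y) ` face_at y))"
    by (rule aff_dim_eq_dim_subtract)
  then show ?thesis
    using span_face_at[OF assms] dim_span by metis
qed

end

section \<open>Monotone lattice paths\<close>

lemma path_edges_singleton [simp]: "path_edges [x] = {}"
  by (simp add: path_edges_def)

lemma path_edges_snoc:
  assumes "p \<noteq> []"
  shows "path_edges (p @ [v]) = insert (last p, v) (path_edges p)"
proof (intro set_eqI iffI)
  fix x assume "x \<in> path_edges (p @ [v])"
  then obtain i where i: "x = ((p @ [v]) ! i, (p @ [v]) ! (i + 1))" "i + 1 < length p + 1"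
    by (auto simp: path_edges_def)
  show "x \<in> insert (last p, v) (path_edges p)"
  proof (cases "i + 1 < length p")
    case True then show ?thesis using i by (auto simp: nth_append path_edges_def)
  next
    case False then have "i = length p - 1" using i by auto
    then show ?thesis using i assms by (auto simp: nth_append last_conv_nth)
  qed
next
  fix x assume "x \<in> insert (last p, v) (path_edges p)"
  then show "x \<in> path_edges (p @ [v])"
  proof
    assume "x = (last p, v)"
    then show ?thesis using assms unfolding path_edges_def
      by (intro CollectI exI[of _ "length p - 1"]) (auto simp: nth_append last_conv_nth)
  next
    assume "x \<in> path_edges p"
    then obtain i where "x = (p ! i, p ! (i + 1))" "i + 1 < length p"
      by (auto simp: path_edges_def)
    then show ?thesis unfolding path_edges_def
      by (intro CollectI exI[of _ i]) (auto simp: nth_append)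
  qed
qed

lemma path_edges_append_subset: "path_edges p \<subseteq> path_edges (p @ s)"
  unfolding path_edges_def by (force simp: nth_append)

lemma path_edges_in_set: "(u, v) \<in> path_edges p \<Longrightarrow> u \<in> set p \<and> v \<in> set p"
  by (auto simp: path_edges_def)

inductive mono_path :: "vtx list \<Rightarrow> bool" where
  start: "mono_path [(0, 0)]"
| right: "mono_path p \<Longrightarrow> last p = (a, b) \<Longrightarrow> mono_path (p @ [(Suc a, b)])"
| up: "mono_path p \<Longrightarrow> last p = (a, b) \<Longrightarrow> mono_path (p @ [(a, Suc b)])"

lemma mono_path_snoc:
  assumes "mono_path p" "v = (Suc (fst (last p)), snd (last p)) \<or> v = (fst (last p), Suc (snd (last p)))"
  shows "mono_path (p @ [v])"
  using assms mono_path.right[OF assms(1)] mono_path.up[OF assms(1)] by (metis prod.collapse)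

lemma mono_path_hd: "mono_path p \<Longrightarrow> p \<noteq> [] \<and> hd p = (0, 0)"
  by (induction rule: mono_path.induct) auto

lemma mono_path_not_Nil: "mono_path p \<Longrightarrow> p \<noteq> []"
  using mono_path_hd by blast

lemma mono_path_length: "mono_path p \<Longrightarrow> length p = fst (last p) + snd (last p) + 1"
  by (induction rule: mono_path.induct) auto

lemma mono_path_bounded:
  "mono_path p \<Longrightarrow> u \<in> set p \<Longrightarrow> fst u \<le> fst (last p) \<and> snd u \<le> snd (last p)"
  by (induction arbitrary: u rule: mono_path.induct) (auto, (metis fst_conv snd_conv le_SucI)+)

lemma mono_path_edge_step:
  "mono_path p \<Longrightarrow> (u, v) \<in> path_edges p \<Longrightarrow> v = (Suc (fst u), snd u) \<or> v = (fst u, Suc (snd u))"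
  by (induction rule: mono_path.induct) (auto simp: path_edges_snoc mono_path_not_Nil)

lemma mono_path_set_subset:
  "mono_path p \<Longrightarrow> set p \<subseteq> insert (0, 0) (snd ` path_edges p)"
  by (induction rule: mono_path.induct) (auto simp: path_edges_snoc mono_path_not_Nil)

lemma mono_path_crossing_exists:
  "mono_path p \<Longrightarrow> 1 \<le> i \<Longrightarrow> i \<le> fst (last p) \<Longrightarrow> \<exists>b. ((i - 1, b), (i, b)) \<in> path_edges p"
proof (induction arbitrary: i rule: mono_path.induct)
  case (right p a b)
  then show ?case
    by (cases "i = Suc a") (auto simp: path_edges_snoc mono_path_not_Nil intro: exI[of _ b])
qed (auto simp: path_edges_snoc mono_path_not_Nil)

lemma mono_path_crossing_bounded:
  "mono_path p \<Longrightarrow> ((i, b), (Suc i, b)) \<in> path_edges p \<Longrightarrow> Suc i \<le> fst (last p) \<and> b \<le> snd (last p)"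
  using mono_path_bounded path_edges_in_set by fastforce

lemma mono_path_crossing_unique:
  "mono_path p \<Longrightarrow> ((i, b), (Suc i, b)) \<in> path_edges p \<Longrightarrow> ((i, b'), (Suc i, b')) \<in> path_edges p \<Longrightarrow> b = b'"
proof (induction rule: mono_path.induct)
  case (right p a c)
  have "p \<noteq> []" using right mono_path_not_Nil by blast
  moreover have "((a, d), (Suc a, d)) \<notin> path_edges p" for d
    using mono_path_crossing_bounded[OF right(1)] right(2) by fastforce
  ultimately show ?case
    using right by (cases "i = a") (auto simp: path_edges_snoc)
qed (auto simp: path_edges_snoc mono_path_not_Nil)

lemma mono_path_crossing_mono:
  "mono_path p \<Longrightarrow> ((Suc i, b), (Suc (Suc i), b)) \<in> path_edges p \<Longrightarrow>
    \<exists>b'\<le>b. ((i, b'), (Suc i, b')) \<in> path_edges p"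
proof (induction rule: mono_path.induct)
  case (right p a c)
  have ne: "p \<noteq> []" using right mono_path_not_Nil by blast
  show ?case
  proof (cases "((Suc i, b), (Suc (Suc i), b)) \<in> path_edges p")
    case True then show ?thesis using right ne by (auto simp: path_edges_snoc)
  next
    case False
    then have "a = Suc i" "c = b" using right(4) ne right(2) by (auto simp: path_edges_snoc)
    then obtain b' where b': "((i, b'), (Suc i, b')) \<in> path_edges p"
      using mono_path_crossing_exists[OF right(1), of "Suc i"] right(2) by auto
    then have "b' \<le> c" using mono_path_crossing_bounded[OF right(1) b'] right(2) by simp
    then show ?thesis using b' ne \<open>c = b\<close> by (auto simp: path_edges_snoc)
  qed
qed (auto simp: path_edges_snoc mono_path_not_Nil)

text \<open>The cells \<open>(i, j)\<close> with \<open>above_path p i j\<close> form the region to the upper left of \<open>p\<close>.\<close>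

definition above_path :: "vtx list \<Rightarrow> nat \<Rightarrow> nat \<Rightarrow> bool" where
  "above_path p i j \<longleftrightarrow> i = 0 \<or> (\<exists>b<j. ((i - 1, b), (i, b)) \<in> path_edges p)"

lemma above_path_Suc_height: "above_path p i j \<Longrightarrow> above_path p i (Suc j)"
  unfolding above_path_def using less_SucI by blast

lemma above_path_prev_column: "mono_path p \<Longrightarrow> above_path p (Suc i) j \<Longrightarrow> above_path p i j"
proof (cases i)
  case (Suc i')
  assume p: "mono_path p" and "above_path p (Suc i) j"
  then obtain b where b: "b < j" "((i, b), (Suc i, b)) \<in> path_edges p"
    by (auto simp: above_path_def)
  then obtain b' where "b' \<le> b" "((i', b'), (Suc i', b')) \<in> path_edges p"
    using mono_path_crossing_mono[OF p, of i' b] Suc by auto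
  then show ?thesis
    using b(1) Suc unfolding above_path_def by (intro disjI2 exI[of _ b']) auto
qed (simp add: above_path_def)

lemma not_above_path_beyond: "mono_path p \<Longrightarrow> fst (last p) < i \<Longrightarrow> \<not> above_path p i j"
  unfolding above_path_def using mono_path_crossing_bounded[of p "i - 1"] by (cases i) auto

lemma above_path_over_end:
  assumes p: "mono_path p" and i: "i \<le> fst (last p)" and j: "snd (last p) < j"
  shows "above_path p i j"
proof (cases "i = 0")
  case False
  then obtain b where b: "((i - 1, b), (i, b)) \<in> path_edges p"
    using mono_path_crossing_exists[OF p, of i] i by auto
  then have "b \<le> snd (last p)"
    using mono_path_crossing_bounded[OF p, of "i - 1" b] False by simp
  then show ?thesis
    using b j unfolding above_path_def by (intro disjI2 exI[of _ b]) auto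
qed (simp add: above_path_def)

lemma above_path_snoc_right:
  "p \<noteq> [] \<Longrightarrow> last p = (a, c) \<Longrightarrow>
    above_path (p @ [(Suc a, c)]) i j \<longleftrightarrow> above_path p i j \<or> (i = Suc a \<and> c < j)"
  by (auto simp: above_path_def path_edges_snoc)

lemma above_path_snoc_up:
  "p \<noteq> [] \<Longrightarrow> last p = (a, c) \<Longrightarrow> above_path (p @ [(a, Suc c)]) i j \<longleftrightarrow> above_path p i j"
  by (auto simp: above_path_def path_edges_snoc)

lemma mono_path_last_column_iff:
  assumes "mono_path p" "last p = (a, c)"
  shows "i = a \<longleftrightarrow> above_path p i (Suc c) \<and> \<not> above_path p (Suc i) (Suc c)"
proof (cases a i rule: linorder_cases)
  case less
  then show ?thesis using not_above_path_beyond[OF assms(1), of i] assms(2) by auto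
next
  case equal
  then show ?thesis
    using not_above_path_beyond[OF assms(1), of "Suc i"] above_path_over_end[OF assms(1), of i "Suc c"] assms(2)
    by auto
next
  case greater
  then show ?thesis using above_path_over_end[OF assms(1), of "Suc i" "Suc c"] assms(2) by auto
qed

lemma mono_path_vertical_edge_iff:
  "mono_path p \<Longrightarrow> ((a, b), (a, Suc b)) \<in> path_edges p \<longleftrightarrow>
    above_path p a (Suc b) \<and> \<not> above_path p (Suc a) (Suc b) \<and> Suc b \<le> snd (last p)"
proof (induction arbitrary: a b rule: mono_path.induct)
  case start then show ?case by simp
next
  case (right p a0 c0)
  have ne: "p \<noteq> []" using right mono_path_not_Nil by blast
  have "((a, b), (a, Suc b)) \<in> path_edges (p @ [(Suc a0, c0)]) \<longleftrightarrow> ((a, b), (a, Suc b)) \<in> path_edges p"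
    using ne right(2) by (auto simp: path_edges_snoc)
  then show ?case
    using right.IH[of a b] right(2) ne by (cases "Suc b \<le> c0") (auto simp: above_path_snoc_right)
next
  case (up p a0 c0)
  have ne: "p \<noteq> []" using up mono_path_not_Nil by blast
  have "((a, b), (a, Suc b)) \<in> path_edges (p @ [(a0, Suc c0)]) \<longleftrightarrow>
      ((a, b), (a, Suc b)) \<in> path_edges p \<or> (a = a0 \<and> b = c0)"
    using ne up(2) by (auto simp: path_edges_snoc)
  moreover have "above_path (p @ [(a0, Suc c0)]) i j \<longleftrightarrow> above_path p i j" for i j
    using above_path_snoc_up[OF ne up(2)] .
  ultimately show ?case
    using up.IH[of a b] up(2) mono_path_last_column_iff[OF up(1,2), of a] by (auto simp: not_less_eq_eq)
qed

lemma mono_path_horizontal_edge_iff: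
  "mono_path p \<Longrightarrow> ((a, b), (Suc a, b)) \<in> path_edges p \<longleftrightarrow>
    above_path p (Suc a) (Suc b) \<and> \<not> above_path p (Suc a) b"
  unfolding above_path_def using mono_path_crossing_unique[of p a b] by (auto simp: less_Suc_eq)

section \<open>Positive paths of the ladder diagram\<close>

lemma partial_sum_0 [simp]: "partial_sum k 0 = 0"
  by (simp add: partial_sum_def)

lemma partial_sum_le_sum_list: "partial_sum k l \<le> sum_list k"
  unfolding partial_sum_def by (metis append_take_drop_id le_add1 sum_list_append)

lemma partial_sum_beyond: "length k \<le> l \<Longrightarrow> partial_sum k l = sum_list k"
  by (simp add: partial_sum_def)

lemma partial_sum_less_imp_less_length: "partial_sum k l < sum_list k \<Longrightarrow> l < length k"
  using partial_sum_beyond[of k l] by (cases "l < length k") auto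

lemma partial_sum_bracket:
  "c < partial_sum k m \<Longrightarrow> \<exists>l<m. partial_sum k l \<le> c \<and> c < partial_sum k (Suc l)"
proof (induction m)
  case (Suc m)
  then show ?case
    by (cases "c < partial_sum k m") (auto intro: less_SucI)
qed simp

lemma lambda_of_type_eq_Suc:
  assumes "lambda_of_type k lam" "c < sum_list k" "\<forall>l. c \<noteq> partial_sum k l"
  shows "lam c = lam (Suc c)"
proof -
  obtain l where l: "l < length k" "partial_sum k l < c" "c < partial_sum k (Suc l)"
    using partial_sum_bracket[of c k "length k"] assms(2,3) partial_sum_beyond[of k "length k"]
    by (metis le_neq_implies_less le_refl)
  then have "\<forall>i. partial_sum k l < i \<and> i \<le> partial_sum k (Suc l) \<longrightarrow> lam i = lam (partial_sum k (Suc l))"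
    using assms(1) unfolding lambda_of_type_def by blast
  then show ?thesis using l(2,3) by (metis Suc_leI less_Suc_eq less_imp_le)
qed

lemma lambda_of_type_less:
  assumes "lambda_of_type k lam" "c = partial_sum k l" "1 \<le> c" "c < sum_list k"
  shows "lam (Suc c) < lam c"
proof -
  have "l < length k" using assms(2,4) partial_sum_less_imp_less_length by simp
  moreover have "l \<noteq> 0" using assms(2,3) by (cases l) auto
  ultimately
  obtain l' where "l = Suc l'" "Suc l' < length k" by (cases l) auto
  then show ?thesis using assms(1,2) unfolding lambda_of_type_def by auto
qed

lemma terminal_sum: "(c, d) \<in> terminals k \<Longrightarrow> c + d = sum_list k"
  unfolding terminals_def using partial_sum_le_sum_list by force

lemma terminals_axes: "(0, sum_list k) \<in> terminals k" "(sum_list k, 0) \<in> terminals k"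
  unfolding terminals_def
  by (force intro: exI[of _ 0], force intro: exI[of _ "length k"] simp: partial_sum_beyond)

lemma ladder_walk_butlast:
  assumes "ladder_walk k (xs @ [x])" "xs \<noteq> []"
  shows "ladder_walk k xs" "(last xs, x) \<in> ladder_edges k"
proof -
  have e: "((xs @ [x]) ! i, (xs @ [x]) ! (i + 1)) \<in> ladder_edges k" if "i < length xs" for i
    using assms(1) that unfolding ladder_walk_def by auto
  have "(xs ! i, xs ! (i + 1)) \<in> ladder_edges k" if "i + 1 < length xs" for i
    using e[of i] that by (simp add: nth_append)
  then show "ladder_walk k xs"
    using assms by (auto simp: ladder_walk_def)
  show "(last xs, x) \<in> ladder_edges k"
    using e[of "length xs - 1"] assms(2) by (simp add: nth_append last_conv_nth)
qed

lemma ladder_walk_from_origin_imp_mono_path: "ladder_walk k q \<Longrightarrow> hd q = (0, 0) \<Longrightarrow> mono_path q"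
proof (induction q rule: rev_induct)
  case (snoc x xs)
  show ?case
  proof (cases "xs = []")
    case True then show ?thesis using snoc by (simp add: mono_path.start)
  next
    case False
    with snoc have "mono_path xs" "(last xs, x) \<in> ladder_edges k"
      using ladder_walk_butlast by auto
    then show ?thesis
      by (intro mono_path_snoc) (auto simp: ladder_edges_def)
  qed
qed (simp add: ladder_walk_def)

lemma mono_path_imp_ladder_walk:
  assumes p: "mono_path p" and t: "last p \<in> terminals k"
  shows "ladder_walk k p"
proof -
  have lv: "set p \<subseteq> ladder_vertices k"
    using mono_path_bounded[OF p] t unfolding ladder_vertices_def by (fastforce split: prod.splits)
  have "(p ! i, p ! (i + 1)) \<in> ladder_edges k" if i: "i + 1 < length p" for i
  proof -
    have "(p ! i, p ! (i + 1)) \<in> path_edges p" using i by (auto simp: path_edges_def)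
    moreover have "p ! i \<in> ladder_vertices k" "p ! (i + 1) \<in> ladder_vertices k" using lv i by auto
    ultimately show ?thesis
      using mono_path_edge_step[OF p, of "p ! i" "p ! (i + 1)"] unfolding ladder_edges_def
      by (cases "p ! i"; cases "p ! (i + 1)") auto
  qed
  then show ?thesis using lv mono_path_not_Nil[OF p] by (simp add: ladder_walk_def)
qed

lemma positive_path_iff: "positive_path k p \<longleftrightarrow> mono_path p \<and> last p \<in> terminals k"
proof
  assume "positive_path k p"
  then show "mono_path p \<and> last p \<in> terminals k"
    unfolding positive_path_def using ladder_walk_from_origin_imp_mono_path by blast
next
  assume p: "mono_path p \<and> last p \<in> terminals k"
  have "length p \<le> length q" if "ladder_walk k q" "hd q = (0, 0)" "last q = last p" for q
    using ladder_walk_from_origin_imp_mono_path[OF that(1,2)] mono_path_length p that(3) by simp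
  then show "positive_path k p"
    using p mono_path_imp_ladder_walk mono_path_hd by (auto simp: positive_path_def)
qed

lemma positive_path_terminal_is_last:
  assumes "positive_path k p" "u \<in> set p" "u \<in> terminals k"
  shows "last p = u"
proof -
  have p: "mono_path p" "last p \<in> terminals k" using assms(1) positive_path_iff by auto
  have "fst u \<le> fst (last p)" "snd u \<le> snd (last p)" using mono_path_bounded[OF p(1) assms(2)] by auto
  moreover have "fst u + snd u = fst (last p) + snd (last p)"
    using terminal_sum[of "fst u" "snd u" k] terminal_sum[of "fst (last p)" "snd (last p)" k] p(2) assms(3)
    by simp
  ultimately show ?thesis by (cases u; cases "last p") auto
qed

lemma finite_positive_paths: "finite {p. positive_path k p}"
proof (rule finite_subset)
  show "{p. positive_path k p} \<subseteq> {p. set p \<subseteq> ladder_vertices k \<and> length p \<le> sum_list k + 1}"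
  proof (rule subsetI, unfold mem_Collect_eq)
    fix p assume "positive_path k p"
    then have p: "mono_path p" "last p \<in> terminals k" "set p \<subseteq> ladder_vertices k"
      using positive_path_iff[of k p] by (auto simp: positive_path_def ladder_walk_def)
    then show "set p \<subseteq> ladder_vertices k \<and> length p \<le> sum_list k + 1"
      using mono_path_length[OF p(1)] terminal_sum[of "fst (last p)" "snd (last p)" k] by simp
  qed
  have "ladder_vertices k \<subseteq> {0..sum_list k} \<times> {0..sum_list k}"
    unfolding ladder_vertices_def using terminal_sum by fastforce
  then show "finite {p. set p \<subseteq> ladder_vertices k \<and> length p \<le> sum_list k + 1}"
    by (intro finite_lists_length_le) (auto intro: finite_subset)
qed

section \<open>The Gelfand--Cetlin polytope and the dimension of its faces\<close>

definition grid_step :: "nat \<times> nat \<Rightarrow> bool \<Rightarrow> nat \<times> nat" where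
  "grid_step p up = (if up then (fst p, Suc (snd p)) else (Suc (fst p), snd p))"

text \<open>The defining inequalities of the polytope are indexed by \<open>(p, up)\<close> with \<open>p \<in> GC_index n\<close>:
  \<open>(p, True)\<close> is \<open>x p \<le> x (p + (0, 1))\<close> and \<open>(p, False)\<close> is \<open>x (p + (1, 0)) \<le> x p\<close>, with the
  convention of \<open>GC_coord\<close> at the boundary \<open>fst p + snd p = n + 1\<close>.\<close>

definition gc_slack ::
    "nat \<Rightarrow> (nat \<Rightarrow> real) \<Rightarrow> (nat \<times> nat \<Rightarrow> 'd) \<Rightarrow> real ^ 'd \<Rightarrow> (nat \<times> nat) \<times> bool \<Rightarrow> real" where
  "gc_slack n lam e x c =
     (if snd c then GC_coord n lam e x (grid_step (fst c) True) - GC_coord n lam e x (fst c)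
      else GC_coord n lam e x (fst c) - GC_coord n lam e x (grid_step (fst c) False))"

lemma grid_step_sum [simp]: "fst (grid_step p up) + snd (grid_step p up) = Suc (fst p + snd p)"
  by (simp add: grid_step_def)

lemma GC_index_iff: "p \<in> GC_index n \<longleftrightarrow> 1 \<le> fst p \<and> 1 \<le> snd p \<and> fst p + snd p \<le> n"
  by (cases p) (auto simp: GC_index_def)

lemma finite_GC_index: "finite (GC_index n)"
  by (rule finite_subset[of _ "{0..n} \<times> {0..n}"]) (auto simp: GC_index_def)

lemma gc_slack_split: "gc_slack n lam e x c = gc_slack n (\<lambda>_. 0) e x c + gc_slack n lam e 0 c"
  by (simp add: gc_slack_def GC_coord_def)

lemma linear_gc_slack: "linear (\<lambda>x. gc_slack n (\<lambda>_. 0) e x c)"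
  by (rule linearI) (auto simp: gc_slack_def GC_coord_def algebra_simps)

fun root_walk :: "nat \<Rightarrow> (nat \<times> nat \<Rightarrow> real) \<Rightarrow> nat \<times> nat \<Rightarrow> nat \<times> nat" where
  "root_walk 0 f p = p"
| "root_walk (Suc m) f p =
    (if f (grid_step p True) = f p then root_walk m f (grid_step p True)
     else if f (grid_step p False) = f p then root_walk m f (grid_step p False) else p)"

locale gc_polytope =
  fixes n :: nat and lam :: "nat \<Rightarrow> real" and e :: "nat \<times> nat \<Rightarrow> 'd::finite"
  assumes inj_e: "inj_on e (GC_index n)"
begin

abbreviation coord :: "real ^ 'd \<Rightarrow> nat \<times> nat \<Rightarrow> real" where
  "coord \<equiv> GC_coord n lam e"

abbreviation lin_coord :: "real ^ 'd \<Rightarrow> nat \<times> nat \<Rightarrow> real" where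
  "lin_coord \<equiv> GC_coord n (\<lambda>_. 0) e"

sublocale linear_inequalities "{x. \<forall>t. t \<notin> e ` GC_index n \<longrightarrow> x $ t = 0}" "GC_index n \<times> UNIV"
  "\<lambda>c x. gc_slack n (\<lambda>_. 0) e x c" "\<lambda>c. gc_slack n lam e 0 c"
  by (intro linear_inequalities.intro) (auto simp: subspace_def finite_GC_index linear_gc_slack)

lemma tight_eq: "tight y = {c \<in> GC_index n \<times> UNIV. gc_slack n lam e y c = 0}"
  unfolding tight_def by (simp only: gc_slack_split[symmetric])

lemma polyhedron_eq_GC_polytope: "polyhedron = GC_polytope n lam e"
proof -
  have "(\<forall>c \<in> GC_index n \<times> UNIV. 0 \<le> gc_slack n lam e x c) \<longleftrightarrow>
      (\<forall>(i, j) \<in> GC_index n. coord x (i, j + 1) \<ge> coord x (i, j) \<and> coord x (i, j) \<ge> coord x (i + 1, j))"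
    for x
    unfolding Ball_def by (auto simp: gc_slack_def grid_step_def all_bool_eq)
  moreover have "polyhedron = {x. (\<forall>t. t \<notin> e ` GC_index n \<longrightarrow> x $ t = 0) \<and>
      (\<forall>c \<in> GC_index n \<times> UNIV. 0 \<le> gc_slack n lam e x c)}"
    unfolding polyhedron_def by (simp only: gc_slack_split[symmetric] mem_Collect_eq)
  ultimately show ?thesis
    unfolding GC_polytope_def by simp
qed

lemma tight_iff: "p \<in> GC_index n \<Longrightarrow> (p, up) \<in> tight y \<longleftrightarrow> coord y (grid_step p up) = coord y p"
  unfolding tight_eq by (cases up) (auto simp: gc_slack_def)

lemma lin_slack_eq_0_iff:
  "gc_slack n (\<lambda>_. 0) e v (p, up) = 0 \<longleftrightarrow> lin_coord v (grid_step p up) = lin_coord v p"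
  by (cases up) (auto simp: gc_slack_def)

lemma coord_mono:
  assumes "y \<in> polyhedron" "(a, b) \<in> GC_index n"
  shows "coord y (a, b) \<le> coord y (a, Suc b)" "coord y (Suc a, b) \<le> coord y (a, b)"
  using assms by (auto simp: polyhedron_eq_GC_polytope GC_polytope_def)

lemma flat_square_iff:
  assumes "y \<in> polyhedron" "(a, Suc b) \<in> GC_index n" "(Suc a, b) \<in> GC_index n"
  shows "coord y (a, Suc b) = coord y (a, b) \<and> coord y (Suc a, b) = coord y (a, b) \<longleftrightarrow>
    coord y (Suc a, Suc b) = coord y (Suc a, b) \<and> coord y (a, Suc b) = coord y (Suc a, Suc b)"
proof -
  have "(a, b) \<in> GC_index n" using assms(2,3) by (simp add: GC_index_iff)
  from coord_mono[OF assms(1) this] coord_mono[OF assms(1) assms(2)] coord_mono[OF assms(1) assms(3)]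
  show ?thesis by (intro iffI conjI; elim conjE; linarith)
qed

text \<open>Cells of equal coordinates: from any cell, following equal neighbours (upwards first) leads
  to a corner, where both neighbours differ, or to the boundary row of \<open>\<lambda>\<close>-values. The
  coordinates of a direction of the face at \<open>y\<close> are constant along the way, so such a direction
  is determined by its values at the corners.\<close>

definition boundary :: "(nat \<times> nat) set" where
  "boundary = {p. 1 \<le> fst p \<and> 1 \<le> snd p \<and> fst p + snd p = n + 1}"

definition corners :: "real ^ 'd \<Rightarrow> (nat \<times> nat) set" where
  "corners y = {p \<in> GC_index n. coord y (grid_step p True) \<noteq> coord y p \<and>
                               coord y (grid_step p False) \<noteq> coord y p}"

definition root :: "real ^ 'd \<Rightarrow> nat \<times> nat \<Rightarrow> nat \<times> nat" where
  "root y p = root_walk (n + 1 - (fst p + snd p)) (coord y) p"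

lemma corners_subset: "corners y \<subseteq> GC_index n"
  by (auto simp: corners_def)

lemma finite_corners: "finite (corners y)"
  using finite_GC_index corners_subset by (rule finite_subset[rotated])

lemma boundary_not_index: "p \<in> boundary \<Longrightarrow> p \<notin> GC_index n"
  by (auto simp: boundary_def GC_index_iff)

lemma grid_step_index: "p \<in> GC_index n \<Longrightarrow> grid_step p up \<in> GC_index n \<union> boundary"
  by (cases up) (auto simp: GC_index_iff boundary_def grid_step_def)

lemma lin_coord_index: "p \<in> GC_index n \<Longrightarrow> lin_coord v p = v $ e p"
  by (auto simp: GC_coord_def GC_index_iff)

lemma lin_coord_boundary: "p \<in> boundary \<Longrightarrow> lin_coord v p = 0"
  by (auto simp: GC_coord_def boundary_def)

lemma root_walk_range:
  "1 \<le> fst p \<Longrightarrow> 1 \<le> snd p \<Longrightarrow> fst p + snd p + m = n + 1 \<Longrightarrow>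
    root_walk m (coord y) p \<in> corners y \<union> boundary"
proof (induction m arbitrary: p)
  case (Suc m)
  then have "p \<in> GC_index n" by (auto simp: GC_index_iff)
  with Suc show ?case
    using Suc.IH[of "grid_step p True"] Suc.IH[of "grid_step p False"]
    by (auto simp: corners_def grid_step_def)
qed (auto simp: boundary_def)

lemma root_range: "p \<in> GC_index n \<union> boundary \<Longrightarrow> root y p \<in> corners y \<union> boundary"
  unfolding root_def by (rule root_walk_range) (auto simp: GC_index_iff boundary_def)

lemma root_corner: "p \<in> corners y \<Longrightarrow> root y p = p"
proof -
  assume p: "p \<in> corners y"
  then have "n + 1 - (fst p + snd p) = Suc (n - (fst p + snd p))"
    by (auto simp: corners_def GC_index_iff)
  then show ?thesis using p by (simp add: root_def corners_def)
qed

lemma root_boundary: "p \<in> boundary \<Longrightarrow> root y p = p"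
  by (auto simp: root_def boundary_def)

lemma lin_coord_root_walk:
  assumes v: "v \<in> face_directions y"
  shows "1 \<le> fst p \<Longrightarrow> 1 \<le> snd p \<Longrightarrow> fst p + snd p + m = n + 1 \<Longrightarrow>
    lin_coord v (root_walk m (coord y) p) = lin_coord v p"
proof (induction m arbitrary: p)
  case (Suc m)
  then have p: "p \<in> GC_index n" by (auto simp: GC_index_iff)
  have "lin_coord v (grid_step p up) = lin_coord v p" if "coord y (grid_step p up) = coord y p" for up
  proof -
    have "(p, up) \<in> tight y" using tight_iff[OF p] that by simp
    then show ?thesis using v lin_slack_eq_0_iff[of v p up] by (auto simp: face_directions_def)
  qed
  from this[of True] this[of False] Suc show ?case
    using Suc.IH[of "grid_step p True"] Suc.IH[of "grid_step p False"]
    by (auto simp: grid_step_def)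
qed simp

lemma lin_coord_root: "v \<in> face_directions y \<Longrightarrow> p \<in> GC_index n \<Longrightarrow> lin_coord v (root y p) = lin_coord v p"
  unfolding root_def by (rule lin_coord_root_walk) (auto simp: GC_index_iff)

lemma root_walk_step:
  assumes y: "y \<in> polyhedron"
  shows "p \<in> GC_index n \<Longrightarrow> fst p + snd p + Suc m = n + 1 \<Longrightarrow> coord y (grid_step p up) = coord y p \<Longrightarrow>
    root_walk (Suc m) (coord y) p = root_walk m (coord y) (grid_step p up) \<or>
    root_walk (Suc m) (coord y) p \<in> boundary \<and> root_walk m (coord y) (grid_step p up) \<in> boundary"
proof (induction m arbitrary: p up)
  case 0
  then have "grid_step p True \<in> boundary" "grid_step p False \<in> boundary"
    by (auto simp: boundary_def grid_step_def GC_index_iff)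
  then show ?case using 0(3) by (cases up) auto
next
  case (Suc m)
  obtain i j where p: "p = (i, j)" by fastforce
  consider "up" | "\<not> up" "coord y (grid_step p True) \<noteq> coord y p" | "\<not> up" "coord y (grid_step p True) = coord y p"
    by blast
  then show ?case
  proof cases
    case 3
    then have eqs: "coord y (i, Suc j) = coord y (i, j)" "coord y (Suc i, j) = coord y (i, j)"
      using Suc.prems(3) p by (auto simp: grid_step_def)
    have idx: "(i, Suc j) \<in> GC_index n" "(Suc i, j) \<in> GC_index n"
      using Suc.prems p by (auto simp: GC_index_iff)
    have "coord y (Suc i, Suc j) = coord y (i, Suc j)" "coord y (Suc i, Suc j) = coord y (Suc i, j)"
      using flat_square_iff[OF y idx] eqs by (blast intro: sym)+
    moreover have "root_walk (Suc (Suc m)) (coord y) p = root_walk (Suc m) (coord y) (i, Suc j)"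
      using 3 p by (simp add: grid_step_def)
    moreover have "root_walk (Suc m) (coord y) (Suc i, j) = root_walk m (coord y) (Suc i, Suc j)"
      using calculation(2) by (simp add: grid_step_def)
    ultimately show ?thesis
      using Suc.IH[of "(i, Suc j)" False] idx(1) Suc.prems(2) 3 p by (simp add: grid_step_def)
  qed (use Suc.prems in simp_all)
qed

lemma root_step:
  assumes "y \<in> polyhedron" "p \<in> GC_index n" "coord y (grid_step p up) = coord y p"
  shows "root y p = root y (grid_step p up) \<or> root y p \<in> boundary \<and> root y (grid_step p up) \<in> boundary"
proof -
  define m where "m = n - (fst p + snd p)"
  have m: "fst p + snd p + Suc m = n + 1" using assms(2) by (auto simp: m_def GC_index_iff)
  then have "n + 1 - (fst p + snd p) = Suc m" "n + 1 - (fst (grid_step p up) + snd (grid_step p up)) = m"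
    by simp_all
  then have "root y p = root_walk (Suc m) (coord y) p" "root y (grid_step p up) = root_walk m (coord y) (grid_step p up)"
    unfolding root_def by simp_all
  then show ?thesis using root_walk_step[OF assms(1,2) m assms(3)] by simp
qed

definition block_indicator :: "real ^ 'd \<Rightarrow> nat \<times> nat \<Rightarrow> real ^ 'd" where
  "block_indicator y c = (\<chi> t. if \<exists>p\<in>GC_index n. e p = t \<and> root y p = c then 1 else 0)"

lemma block_indicator_index:
  "p \<in> GC_index n \<Longrightarrow> block_indicator y c $ e p = (if root y p = c then 1 else 0)"
  using inj_e unfolding block_indicator_def by (auto simp: inj_on_def)

lemma block_indicator_outside: "t \<notin> e ` GC_index n \<Longrightarrow> block_indicator y c $ t = 0"
  unfolding block_indicator_def by auto

lemma block_indicator_corner: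
  "c \<in> corners y \<Longrightarrow> c' \<in> corners y \<Longrightarrow> block_indicator y c' $ e c = (if c = c' then 1 else 0)"
  using block_indicator_index[of c y c'] root_corner[of c y] corners_subset[of y] by auto

lemma block_indicator_direction:
  assumes y: "y \<in> polyhedron" and c: "c \<in> corners y"
  shows "block_indicator y c \<in> face_directions y"
  unfolding face_directions_def
proof (intro CollectI conjI allI impI ballI)
  fix t assume "t \<notin> e ` GC_index n"
  then show "block_indicator y c $ t = 0" by (rule block_indicator_outside)
next
  fix pu assume pu: "pu \<in> tight y"
  obtain p up where pu_eq: "pu = (p, up)" by fastforce
  have p: "p \<in> GC_index n" and eq: "coord y (grid_step p up) = coord y p"
    using pu tight_iff[of p up y] by (auto simp: pu_eq tight_eq)
  have c_not_boundary: "c \<notin> boundary"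
    using c corners_subset boundary_not_index by blast
  have steps: "root y p = root y (grid_step p up) \<or> root y p \<in> boundary \<and> root y (grid_step p up) \<in> boundary"
    by (rule root_step[OF y p eq])
  have "lin_coord (block_indicator y c) (grid_step p up) = lin_coord (block_indicator y c) p"
  proof (cases "grid_step p up \<in> boundary")
    case True
    then have "root y p \<in> boundary" using steps root_boundary by metis
    then show ?thesis
      using True c_not_boundary lin_coord_boundary lin_coord_index[OF p] block_indicator_index[OF p] by auto
  next
    case False
    then have q: "grid_step p up \<in> GC_index n" using grid_step_index[OF p] by auto
    show ?thesis
      using steps c_not_boundary lin_coord_index[OF p] lin_coord_index[OF q]
        block_indicator_index[OF p] block_indicator_index[OF q] by auto
  qed
  then show "gc_slack n (\<lambda>_. 0) e (block_indicator y c) pu = 0"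
    using pu_eq lin_slack_eq_0_iff by simp
qed

lemma block_indicators_orthogonal:
  assumes "c \<noteq> c'"
  shows "orthogonal (block_indicator y c) (block_indicator y c')"
proof -
  have "block_indicator y c $ t * block_indicator y c' $ t = 0" for t
  proof (cases "t \<in> e ` GC_index n")
    case True
    then obtain p where "p \<in> GC_index n" "t = e p" by auto
    then show ?thesis using block_indicator_index assms by auto
  qed (simp add: block_indicator_outside)
  then have "(\<Sum>t\<in>UNIV. block_indicator y c $ t * block_indicator y c' $ t) = 0"
    by (intro sum.neutral) auto
  then show ?thesis
    unfolding orthogonal_def inner_vec_def by simp
qed

lemma block_indicator_self: "c \<in> corners y \<Longrightarrow> block_indicator y c $ e c = 1"
  using block_indicator_corner[of c y c] by simp

lemma independent_block_indicators: "independent (block_indicator y ` corners y)"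
proof (rule pairwise_orthogonal_independent)
  show "pairwise orthogonal (block_indicator y ` corners y)"
    unfolding pairwise_def
  proof (intro ballI impI)
    fix x z assume "x \<in> block_indicator y ` corners y" "z \<in> block_indicator y ` corners y" "x \<noteq> z"
    then obtain c c' where "x = block_indicator y c" "z = block_indicator y c'" "c \<noteq> c'" by blast
    then show "orthogonal x z" using block_indicators_orthogonal by simp
  qed
  show "0 \<notin> block_indicator y ` corners y"
    using block_indicator_self by fastforce
qed

lemma inj_on_block_indicator: "inj_on (block_indicator y) (corners y)"
proof (rule inj_onI)
  fix c c' assume "c \<in> corners y" "c' \<in> corners y" "block_indicator y c = block_indicator y c'"
  then show "c = c'"
    using block_indicator_corner[of c y c'] block_indicator_self[of c y] by (auto split: if_splits)
qed

lemma face_directions_expansion: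
  assumes v: "v \<in> face_directions y"
  shows "v = (\<Sum>c\<in>corners y. (v $ e c) *\<^sub>R block_indicator y c)"
  unfolding vec_eq_iff
proof
  fix t
  show "v $ t = (\<Sum>c\<in>corners y. (v $ e c) *\<^sub>R block_indicator y c) $ t"
  proof (cases "t \<in> e ` GC_index n")
    case False then show ?thesis using v block_indicator_outside by (simp add: face_directions_def)
  next
    case True
    then obtain p where p: "p \<in> GC_index n" "t = e p" by auto
    have "(\<Sum>c\<in>corners y. (v $ e c) *\<^sub>R block_indicator y c) $ t =
        (\<Sum>c\<in>corners y. (v $ e c) * (if root y p = c then 1 else 0))"
      using p block_indicator_index by simp
    also have "\<dots> = (if root y p \<in> corners y then v $ e (root y p) else 0)"
      using finite_corners by (simp add: sum.delta' if_distrib cong: if_cong)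
    also have "\<dots> = lin_coord v (root y p)"
    proof (cases "root y p \<in> corners y")
      case True
      then show ?thesis using corners_subset[of y] lin_coord_index[of "root y p" v] by auto
    next
      case False
      then have "root y p \<in> boundary" using root_range[of p y] p(1) by blast
      then show ?thesis using False lin_coord_boundary by simp
    qed
    also have "\<dots> = v $ t"
      using lin_coord_root[OF v p(1)] lin_coord_index[OF p(1)] p(2) by simp
    finally show ?thesis by simp
  qed
qed

lemma dim_face_directions:
  assumes "y \<in> polyhedron"
  shows "dim (face_directions y) = card (corners y)"
proof (rule dim_unique[OF _ _ independent_block_indicators])
  show "block_indicator y ` corners y \<subseteq> face_directions y"
    using block_indicator_direction[OF assms] by auto
  show "face_directions y \<subseteq> span (block_indicator y ` corners y)"
  proof
    fix v assume "v \<in> face_directions y"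
    then have "v = (\<Sum>c\<in>corners y. (v $ e c) *\<^sub>R block_indicator y c)"
      by (rule face_directions_expansion)
    also have "\<dots> \<in> span (block_indicator y ` corners y)"
      by (intro span_sum span_scale span_base) auto
    finally show "v \<in> span (block_indicator y ` corners y)" .
  qed
  show "card (block_indicator y ` corners y) = card (corners y)"
    using inj_on_block_indicator card_image by blast
qed

end

section \<open>The graph of a face\<close>

lemma num_components_eq_1:
  assumes "r \<in> V" "\<And>v. v \<in> V \<Longrightarrow> (r, v) \<in> (E \<union> E\<inverse>)\<^sup>*"
  shows "num_components (V, E) = 1"
proof -
  have R: "equiv UNIV ((E \<union> E\<inverse>)\<^sup>*)"
    by (simp add: equiv_def refl_rtrancl sym_rtrancl[OF sym_Un_converse] trans_rtrancl)
  have "V // (E \<union> E\<inverse>)\<^sup>* = {(E \<union> E\<inverse>)\<^sup>* `` {r}}"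
    using assms equiv_class_eq_iff[OF R] unfolding quotient_def by blast
  then show ?thesis by (simp add: num_components_def)
qed

lemma mono_path_reaches_last:
  "mono_path p \<Longrightarrow> path_edges p \<subseteq> E \<Longrightarrow> ((0, 0), last p) \<in> E\<^sup>*"
  by (induction rule: mono_path.induct)
    (auto simp: path_edges_snoc mono_path_not_Nil intro: rtrancl_into_rtrancl)

text \<open>The graph attached to a set \<open>TT\<close> of tight inequalities: an edge enters the grid point \<open>v\<close>
  horizontally unless \<open>x v \<le> x (v + (0, 1))\<close> is tight, and vertically unless
  \<open>x (v + (1, 0)) \<le> x v\<close> is tight; the edges along the two axes are always present.\<close>

definition hor_edge_into :: "nat \<Rightarrow> ((nat \<times> nat) \<times> bool) set \<Rightarrow> vtx \<Rightarrow> bool" where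
  "hor_edge_into n TT v \<longleftrightarrow> 1 \<le> fst v \<and> fst v + snd v \<le> n \<and> (snd v = 0 \<or> (v, True) \<notin> TT)"

definition ver_edge_into :: "nat \<Rightarrow> ((nat \<times> nat) \<times> bool) set \<Rightarrow> vtx \<Rightarrow> bool" where
  "ver_edge_into n TT v \<longleftrightarrow> 1 \<le> snd v \<and> fst v + snd v \<le> n \<and> (fst v = 0 \<or> (v, False) \<notin> TT)"

definition face_graph_edges :: "nat \<Rightarrow> ((nat \<times> nat) \<times> bool) set \<Rightarrow> (vtx \<times> vtx) set" where
  "face_graph_edges n TT =
     {((a, b), (Suc a, b)) | a b. hor_edge_into n TT (Suc a, b)} \<union>
     {((a, b), (a, Suc b)) | a b. ver_edge_into n TT (a, Suc b)}"

definition face_graph :: "nat \<Rightarrow> ((nat \<times> nat) \<times> bool) set \<Rightarrow> graph" where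
  "face_graph n TT = (insert (0, 0) (snd ` face_graph_edges n TT), face_graph_edges n TT)"

lemma targets_face_graph_edges:
  "snd ` face_graph_edges n TT = {v. hor_edge_into n TT v} \<union> {v. ver_edge_into n TT v}"
proof (intro set_eqI iffI)
  fix v assume "v \<in> {v. hor_edge_into n TT v} \<union> {v. ver_edge_into n TT v}"
  then consider "hor_edge_into n TT v" | "ver_edge_into n TT v" by blast
  then show "v \<in> snd ` face_graph_edges n TT"
  proof cases
    case 1
    then obtain a b where "v = (Suc a, b)" by (cases v; cases "fst v") (auto simp: hor_edge_into_def)
    then show ?thesis using 1 unfolding face_graph_edges_def by (intro image_eqI[of _ _ "((a, b), v)"]) auto
  next
    case 2
    then obtain a b where "v = (a, Suc b)" by (cases v; cases "snd v") (auto simp: ver_edge_into_def)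
    then show ?thesis using 2 unfolding face_graph_edges_def by (intro image_eqI[of _ _ "((a, b), v)"]) auto
  qed
qed (auto simp: face_graph_edges_def)

lemma face_graph_vertex_iff:
  "v \<in> fst (face_graph n TT) \<longleftrightarrow> v = (0, 0) \<or> hor_edge_into n TT v \<or> ver_edge_into n TT v"
  by (auto simp: face_graph_def targets_face_graph_edges)

lemma face_graph_vertex_sum: "v \<in> fst (face_graph n TT) \<Longrightarrow> fst v + snd v \<le> n"
  by (auto simp: face_graph_vertex_iff hor_edge_into_def ver_edge_into_def)

lemma face_graph_edge_step:
  "(u, v) \<in> face_graph_edges n TT \<Longrightarrow> v = (Suc (fst u), snd u) \<or> v = (fst u, Suc (snd u))"
  by (auto simp: face_graph_edges_def)

lemma finite_edges_into: "finite {v. hor_edge_into n TT v}" "finite {v. ver_edge_into n TT v}"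
  by (auto intro: finite_subset[of _ "{0..n} \<times> {0..n}"] simp: hor_edge_into_def ver_edge_into_def)

lemma card_face_graph_edges:
  "card (face_graph_edges n TT) = card {v. hor_edge_into n TT v} + card {v. ver_edge_into n TT v}"
proof -
  define H where "H = {((a, b), (Suc a, b)) | a b. hor_edge_into n TT (Suc a, b)}"
  define V where "V = {((a, b), (a, Suc b)) | a b. ver_edge_into n TT (a, Suc b)}"
  have H: "H = (\<lambda>v. ((fst v - 1, snd v), v)) ` {v. hor_edge_into n TT v}"
  proof (intro set_eqI iffI)
    fix x assume "x \<in> (\<lambda>v. ((fst v - 1, snd v), v)) ` {v. hor_edge_into n TT v}"
    then obtain v where v: "hor_edge_into n TT v" "x = ((fst v - 1, snd v), v)" by auto
    then obtain a where "fst v = Suc a" by (cases "fst v") (auto simp: hor_edge_into_def)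
    then show "x \<in> H" unfolding H_def using v by (cases v) auto
  qed (auto simp: H_def image_iff)
  have V: "V = (\<lambda>v. ((fst v, snd v - 1), v)) ` {v. ver_edge_into n TT v}"
  proof (intro set_eqI iffI)
    fix x assume "x \<in> (\<lambda>v. ((fst v, snd v - 1), v)) ` {v. ver_edge_into n TT v}"
    then obtain v where v: "ver_edge_into n TT v" "x = ((fst v, snd v - 1), v)" by auto
    then obtain b where "snd v = Suc b" by (cases "snd v") (auto simp: ver_edge_into_def)
    then show "x \<in> V" unfolding V_def using v by (cases v) auto
  qed (auto simp: V_def image_iff)
  have "finite H" "finite V" unfolding H V using finite_edges_into by auto
  moreover have "H \<inter> V = {}" by (auto simp: H_def V_def)
  ultimately have "card (H \<union> V) = card H + card V" by (rule card_Un_disjoint)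
  moreover have "card H = card {v. hor_edge_into n TT v}" "card V = card {v. ver_edge_into n TT v}"
    unfolding H V by (auto intro!: card_image simp: inj_on_def)
  ultimately show ?thesis by (simp add: face_graph_edges_def H_def V_def)
qed

lemma graph_dim_face_graph:
  assumes "num_components (face_graph n TT) = 1"
  shows "graph_dim (face_graph n TT) = int (card ({v. hor_edge_into n TT v} \<inter> {v. ver_edge_into n TT v}))"
proof -
  let ?H = "{v. hor_edge_into n TT v}" and ?V = "{v. ver_edge_into n TT v}"
  have "(0, 0) \<notin> ?H \<union> ?V" by (auto simp: hor_edge_into_def ver_edge_into_def)
  then have "card (fst (face_graph n TT)) = 1 + card (?H \<union> ?V)"
    using finite_edges_into by (simp add: face_graph_def targets_face_graph_edges)
  moreover have "card (?H \<union> ?V) + card (?H \<inter> ?V) = card ?H + card ?V"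
    using finite_edges_into card_Un_Int by metis
  ultimately show ?thesis
    using assms card_face_graph_edges[of n TT] unfolding graph_dim_def by (simp add: face_graph_def)
qed

lemma subgraph_face_graph_iff:
  assumes "T1 \<subseteq> GC_index n \<times> UNIV" "T2 \<subseteq> GC_index n \<times> UNIV"
  shows "subgraph (face_graph n T1) (face_graph n T2) \<longleftrightarrow> T2 \<subseteq> T1"
proof
  assume "T2 \<subseteq> T1"
  then have "face_graph_edges n T1 \<subseteq> face_graph_edges n T2"
    unfolding face_graph_edges_def hor_edge_into_def ver_edge_into_def by blast
  then show "subgraph (face_graph n T1) (face_graph n T2)"
    unfolding subgraph_def face_graph_def by auto
next
  assume sub: "subgraph (face_graph n T1) (face_graph n T2)"
  show "T2 \<subseteq> T1"
  proof
    fix c assume c: "c \<in> T2"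
    obtain a b up where c_eq: "c = ((a, b), up)" by (cases c) auto
    have ab: "1 \<le> a" "1 \<le> b" "a + b \<le> n" using assms(2) c c_eq by (auto simp: GC_index_def)
    show "c \<in> T1"
    proof (cases up)
      case True
      then have "hor_edge_into n T2 (a, b) \<Longrightarrow> False" "hor_edge_into n T1 (a, b) \<or> c \<in> T1"
        using c c_eq ab by (auto simp: hor_edge_into_def)
      moreover have "hor_edge_into n T1 (a, b) \<Longrightarrow> hor_edge_into n T2 (a, b)"
        using sub ab(1) unfolding subgraph_def face_graph_def face_graph_edges_def
        by (cases a) fastforce+
      ultimately show ?thesis by blast
    next
      case False
      then have "ver_edge_into n T2 (a, b) \<Longrightarrow> False" "ver_edge_into n T1 (a, b) \<or> c \<in> T1"
        using c c_eq ab by (auto simp: ver_edge_into_def)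
      moreover have "ver_edge_into n T1 (a, b) \<Longrightarrow> ver_edge_into n T2 (a, b)"
        using sub ab(2) unfolding subgraph_def face_graph_def face_graph_edges_def
        by (cases b) fastforce+
      ultimately show ?thesis by blast
    qed
  qed
qed

lemma hor_edge_into_axis [simp]: "hor_edge_into n TT (a, 0) \<longleftrightarrow> 1 \<le> a \<and> a \<le> n"
  by (auto simp: hor_edge_into_def)

lemma ver_edge_into_axis [simp]: "ver_edge_into n TT (0, b) \<longleftrightarrow> 1 \<le> b \<and> b \<le> n"
  by (auto simp: ver_edge_into_def)

context gc_polytope
begin

abbreviation graph_vertices :: "real ^ 'd \<Rightarrow> vtx set" where
  "graph_vertices y \<equiv> fst (face_graph n (tight y))"

abbreviation graph_edges :: "real ^ 'd \<Rightarrow> (vtx \<times> vtx) set" where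
  "graph_edges y \<equiv> face_graph_edges n (tight y)"

lemma hor_edge_into_tight_iff:
  "(a, b) \<in> GC_index n \<Longrightarrow> hor_edge_into n (tight y) (a, b) \<longleftrightarrow> coord y (a, Suc b) \<noteq> coord y (a, b)"
  using tight_iff[of "(a, b)" True y] by (auto simp: hor_edge_into_def GC_index_iff grid_step_def)

lemma ver_edge_into_tight_iff:
  "(a, b) \<in> GC_index n \<Longrightarrow> ver_edge_into n (tight y) (a, b) \<longleftrightarrow> coord y (Suc a, b) \<noteq> coord y (a, b)"
  using tight_iff[of "(a, b)" False y] by (auto simp: ver_edge_into_def GC_index_iff grid_step_def)

lemma corners_eq_edges_into:
  "{v. hor_edge_into n (tight y) v} \<inter> {v. ver_edge_into n (tight y) v} = corners y"
proof (intro set_eqI)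
  fix v :: vtx
  obtain a b where v: "v = (a, b)" by fastforce
  have "v \<in> GC_index n" if "hor_edge_into n (tight y) v \<and> ver_edge_into n (tight y) v \<or> v \<in> corners y"
    using that corners_subset[of y] by (auto simp: hor_edge_into_def ver_edge_into_def GC_index_iff)
  then show "v \<in> {v. hor_edge_into n (tight y) v} \<inter> {v. ver_edge_into n (tight y) v} \<longleftrightarrow> v \<in> corners y"
    using hor_edge_into_tight_iff[of a b y] ver_edge_into_tight_iff[of a b y] v
    by (auto simp: corners_def grid_step_def)
qed

text \<open>Both sides say that the coordinates on the unit square spanned by \<open>(a, b)\<close> and
  \<open>(a + 1, b + 1)\<close> are not all equal.\<close>

lemma edge_into_iff_edge_out:
  assumes y: "y \<in> polyhedron" and idx: "(a, Suc b) \<in> GC_index n" "(Suc a, b) \<in> GC_index n"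
  shows "hor_edge_into n (tight y) (a, b) \<or> ver_edge_into n (tight y) (a, b) \<longleftrightarrow>
    hor_edge_into n (tight y) (Suc a, b) \<or> ver_edge_into n (tight y) (a, Suc b)"
proof -
  have "(a, b) \<in> GC_index n" using idx by (simp add: GC_index_iff)
  then show ?thesis
    using flat_square_iff[OF y idx] hor_edge_into_tight_iff ver_edge_into_tight_iff idx by auto
qed

lemma edge_source_vertex:
  assumes y: "y \<in> polyhedron" and uv: "(u, v) \<in> graph_edges y"
  shows "u \<in> graph_vertices y"
proof -
  obtain a b where u: "u = (a, b)" by fastforce
  have out: "hor_edge_into n (tight y) (Suc a, b) \<or> ver_edge_into n (tight y) (a, Suc b)"
    and sum: "Suc (a + b) \<le> n"
    using uv u by (auto simp: face_graph_edges_def hor_edge_into_def ver_edge_into_def)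
  consider "a = 0" | "b = 0" | "1 \<le> a" "1 \<le> b" by linarith
  then show ?thesis
  proof cases
    case 3
    then have "(a, Suc b) \<in> GC_index n" "(Suc a, b) \<in> GC_index n" using sum by (auto simp: GC_index_iff)
    then show ?thesis using edge_into_iff_edge_out[OF y] out u by (auto simp: face_graph_vertex_iff)
  qed (use u sum in \<open>auto simp: face_graph_vertex_iff\<close>)
qed

lemma vertex_has_edge_out:
  assumes y: "y \<in> polyhedron" and v: "v \<in> graph_vertices y" and sum: "fst v + snd v < n"
  shows "\<exists>w. (v, w) \<in> graph_edges y"
proof -
  obtain a b where ab: "v = (a, b)" by fastforce
  have "hor_edge_into n (tight y) (Suc a, b) \<or> ver_edge_into n (tight y) (a, Suc b)"
  proof -
    consider "b = 0" | "a = 0" "1 \<le> b" | "1 \<le> a" "1 \<le> b" by linarith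
    then show ?thesis
    proof cases
      case 3
      then have "(a, Suc b) \<in> GC_index n" "(Suc a, b) \<in> GC_index n" using sum ab by (auto simp: GC_index_iff)
      moreover have "hor_edge_into n (tight y) (a, b) \<or> ver_edge_into n (tight y) (a, b)"
        using v ab 3 by (auto simp: face_graph_vertex_iff)
      ultimately show ?thesis using edge_into_iff_edge_out[OF y] by blast
    qed (use sum ab in auto)
  qed
  then show ?thesis using ab by (auto simp: face_graph_edges_def)
qed

lemma mono_path_in_graph_vertices:
  "mono_path p \<Longrightarrow> path_edges p \<subseteq> graph_edges y \<Longrightarrow> set p \<subseteq> graph_vertices y"
  using mono_path_set_subset by (force simp: face_graph_def)

lemma exists_mono_path_to_vertex:
  assumes y: "y \<in> polyhedron"
  shows "v \<in> graph_vertices y \<Longrightarrow> \<exists>p. mono_path p \<and> last p = v \<and> path_edges p \<subseteq> graph_edges y"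
proof (induction "fst v + snd v" arbitrary: v rule: less_induct)
  case less
  show ?case
  proof (cases "v = (0, 0)")
    case True then show ?thesis by (intro exI[of _ "[(0, 0)]"]) (auto intro: mono_path.start)
  next
    case False
    then obtain u where "(u, v) \<in> graph_edges y"
      using less.prems by (force simp: face_graph_def)
    moreover from this have "v = (Suc (fst u), snd u) \<or> v = (fst u, Suc (snd u))"
      by (rule face_graph_edge_step)
    ultimately have uv: "(u, v) \<in> graph_edges y" "v = (Suc (fst u), snd u) \<or> v = (fst u, Suc (snd u))" .
    then have "fst u + snd u < fst v + snd v" by auto
    then obtain p where p: "mono_path p" "last p = u" "path_edges p \<subseteq> graph_edges y"
      using less.hyps edge_source_vertex[OF y uv(1)] by blast
    then have "mono_path (p @ [v])" "path_edges (p @ [v]) \<subseteq> graph_edges y"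
      using mono_path_snoc uv by (auto simp: path_edges_snoc mono_path_not_Nil)
    then show ?thesis by (intro exI[of _ "p @ [v]"]) simp
  qed
qed

lemma num_components_face_graph: "y \<in> polyhedron \<Longrightarrow> num_components (face_graph n (tight y)) = 1"
proof -
  assume y: "y \<in> polyhedron"
  have "((0, 0), v) \<in> (graph_edges y \<union> (graph_edges y)\<inverse>)\<^sup>*" if "v \<in> graph_vertices y" for v
    using exists_mono_path_to_vertex[OF y that] mono_path_reaches_last
      rtrancl_mono[of "graph_edges y" "graph_edges y \<union> (graph_edges y)\<inverse>"] by blast
  then show ?thesis
    using num_components_eq_1[of "(0, 0)" "graph_vertices y" "graph_edges y"]
    by (simp add: face_graph_def)
qed

lemma graph_dim_face_graph_tight:
  "y \<in> polyhedron \<Longrightarrow> graph_dim (face_graph n (tight y)) = int (card (corners y))"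
  using graph_dim_face_graph[OF num_components_face_graph] corners_eq_edges_into by simp

end

locale gc_ladder = gc_polytope n lam e for n lam and e :: "nat \<times> nat \<Rightarrow> 'd::finite" +
  fixes k :: "nat list"
  assumes n_eq: "n = sum_list k" and lambda_type: "lambda_of_type k lam"
begin

lemma terminals_eq: "terminals k = {(partial_sum k l, n - partial_sum k l) | l. l \<le> length k}"
  unfolding terminals_def n_eq ..

lemma coord_boundary: "a + b = n + 1 \<Longrightarrow> coord y (a, b) = lam a"
  by (simp add: GC_coord_def)

lemma antidiagonal_vertex_iff:
  assumes y: "y \<in> polyhedron" and ab: "(a, b) \<in> GC_index n" "a + b = n"
  shows "hor_edge_into n (tight y) (a, b) \<or> ver_edge_into n (tight y) (a, b) \<longleftrightarrow> lam (Suc a) \<noteq> lam a"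
  using coord_mono[OF y ab(1)] coord_boundary[of a "Suc b" y] coord_boundary[of "Suc a" b y] ab
    hor_edge_into_tight_iff[OF ab(1)] ver_edge_into_tight_iff[OF ab(1)] by auto

lemma antidiagonal_vertex_terminal:
  assumes y: "y \<in> polyhedron" and v: "v \<in> graph_vertices y" and sum: "fst v + snd v = n"
  shows "v \<in> terminals k"
proof -
  obtain a b where ab: "v = (a, b)" by fastforce
  consider "a = 0" | "b = 0" | "1 \<le> a" "1 \<le> b" by linarith
  then show ?thesis
  proof cases
    case 1
    then show ?thesis unfolding terminals_eq using ab sum by (intro CollectI exI[of _ 0]) auto
  next
    case 2
    then show ?thesis
      unfolding terminals_eq using ab sum n_eq partial_sum_beyond[of k "length k"]
      by (intro CollectI exI[of _ "length k"]) auto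
  next
    case 3
    then have "(a, b) \<in> GC_index n" using ab sum by (simp add: GC_index_iff)
    moreover have "hor_edge_into n (tight y) (a, b) \<or> ver_edge_into n (tight y) (a, b)"
      using v ab 3 by (auto simp: face_graph_vertex_iff)
    ultimately have "lam a \<noteq> lam (Suc a)" using antidiagonal_vertex_iff[OF y] ab sum by auto
    then obtain l where l: "a = partial_sum k l"
      using lambda_of_type_eq_Suc[OF lambda_type] 3 sum ab n_eq by force
    then have "l \<le> length k" using partial_sum_less_imp_less_length[of k l] 3 sum ab n_eq by simp
    then show ?thesis unfolding terminals_eq using ab sum l by auto
  qed
qed

lemma terminals_subset_vertices:
  assumes y: "y \<in> polyhedron"
  shows "terminals k \<subseteq> graph_vertices y"
proof
  fix v assume "v \<in> terminals k"
  then obtain l where l: "v = (partial_sum k l, n - partial_sum k l)" unfolding terminals_eq by blast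
  define c where "c = partial_sum k l"
  have "c \<le> n" using partial_sum_le_sum_list n_eq c_def by simp
  then consider "c = 0" | "c = n" | "1 \<le> c" "c < n" by linarith
  then show "v \<in> graph_vertices y"
  proof cases
    case 3
    then have "lam (Suc c) \<noteq> lam c"
      using lambda_of_type_less[OF lambda_type c_def] n_eq by simp
    moreover have "(c, n - c) \<in> GC_index n" using 3 by (simp add: GC_index_iff)
    ultimately show ?thesis
      using antidiagonal_vertex_iff[OF y, of c "n - c"] l c_def 3 by (auto simp: face_graph_vertex_iff)
  qed (use l c_def in \<open>auto simp: face_graph_vertex_iff\<close>)
qed

lemma mono_path_extends_to_positive_path:
  assumes y: "y \<in> polyhedron"
  shows "mono_path p \<Longrightarrow> path_edges p \<subseteq> graph_edges y \<Longrightarrow>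
    \<exists>s. positive_path k (p @ s) \<and> path_edges (p @ s) \<subseteq> graph_edges y"
proof (induction "n - (fst (last p) + snd (last p))" arbitrary: p rule: less_induct)
  case less
  have last_vertex: "last p \<in> graph_vertices y"
    using mono_path_in_graph_vertices[OF less.prems] mono_path_not_Nil[OF less.prems(1)] by auto
  show ?case
  proof (cases "fst (last p) + snd (last p) < n")
    case True
    then obtain w where w: "(last p, w) \<in> graph_edges y"
      using vertex_has_edge_out[OF y last_vertex] by blast
    then have "mono_path (p @ [w])" "path_edges (p @ [w]) \<subseteq> graph_edges y"
      using less.prems face_graph_edge_step[OF w] mono_path_snoc
      by (auto simp: path_edges_snoc mono_path_not_Nil)
    moreover have "n - (fst (last (p @ [w])) + snd (last (p @ [w]))) < n - (fst (last p) + snd (last p))"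
      using True face_graph_edge_step[OF w] by auto
    ultimately obtain s where "positive_path k (p @ [w] @ s)" "path_edges (p @ [w] @ s) \<subseteq> graph_edges y"
      using less.hyps by (metis append_assoc)
    then show ?thesis by (intro exI[of _ "w # s"]) simp
  next
    case False
    then have "last p \<in> terminals k"
      using antidiagonal_vertex_terminal[OF y last_vertex] face_graph_vertex_sum[OF last_vertex] by simp
    then show ?thesis
      using less.prems positive_path_iff by (intro exI[of _ "[]"]) simp
  qed
qed

lemma face_graph_tight_in_ladder_faces:
  assumes y: "y \<in> polyhedron"
  shows "face_graph n (tight y) \<in> ladder_faces k"
proof -
  define S where "S = {q. positive_path k q \<and> path_edges q \<subseteq> graph_edges y}"
  have on_path: "\<exists>q\<in>S. v \<in> set q \<and> path_edges p \<subseteq> path_edges q"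
    if p: "mono_path p" "path_edges p \<subseteq> graph_edges y" "last p = v" for p v
  proof -
    obtain s where "positive_path k (p @ s)" "path_edges (p @ s) \<subseteq> graph_edges y"
      using mono_path_extends_to_positive_path[OF y p(1,2)] by blast
    then show ?thesis
      using p mono_path_not_Nil[OF p(1)] path_edges_append_subset[of p s]
      by (intro bexI[of _ "p @ s"]) (auto simp: S_def)
  qed
  have "graph_vertices y \<subseteq> (\<Union>q\<in>S. set q)"
  proof
    fix v assume "v \<in> graph_vertices y"
    then obtain p where "mono_path p" "last p = v" "path_edges p \<subseteq> graph_edges y"
      using exists_mono_path_to_vertex[OF y] by blast
    then show "v \<in> (\<Union>q\<in>S. set q)" using on_path by blast
  qed
  moreover have "graph_edges y \<subseteq> (\<Union>q\<in>S. path_edges q)"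
  proof
    fix x assume x: "x \<in> graph_edges y"
    obtain u v where uv: "x = (u, v)" by (cases x) blast
    obtain p where p: "mono_path p" "last p = u" "path_edges p \<subseteq> graph_edges y"
      using exists_mono_path_to_vertex[OF y edge_source_vertex[OF y]] x uv by blast
    then have "mono_path (p @ [v])" "path_edges (p @ [v]) \<subseteq> graph_edges y" "x \<in> path_edges (p @ [v])"
      using x uv face_graph_edge_step[of u v] mono_path_snoc
      by (auto simp: path_edges_snoc mono_path_not_Nil)
    then show "x \<in> (\<Union>q\<in>S. path_edges q)" using on_path by blast
  qed
  moreover have "(\<Union>q\<in>S. set q) \<subseteq> graph_vertices y" "(\<Union>q\<in>S. path_edges q) \<subseteq> graph_edges y"
    using mono_path_in_graph_vertices by (auto simp: S_def positive_path_iff)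
  ultimately have "face_graph n (tight y) = ((\<Union>q\<in>S. set q), (\<Union>q\<in>S. path_edges q))"
    by (metis face_graph_def fst_conv snd_conv subset_antisym)
  moreover have "\<forall>q\<in>S. positive_path k q" by (simp add: S_def)
  ultimately show ?thesis
    using terminals_subset_vertices[OF y] unfolding ladder_faces_def by auto
qed

end

section \<open>Realising the faces of the ladder diagram\<close>

text \<open>Given positive paths \<open>S\<close> covering the terminals, the coordinate at \<open>(i, j)\<close> is \<open>lam n\<close>
  plus the weights of the paths of \<open>S\<close> that pass below and to the right of \<open>(i, j)\<close>. The paths
  ending at the terminal \<open>(c, n - c)\<close> share the jump \<open>lam c - lam (c + 1)\<close> equally, which produces
  the prescribed boundary values; the inequalities that are strict at this point are exactly
  those separated by an edge of some path.\<close>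

locale gc_realization = gc_ladder n lam e k for n lam and e :: "nat \<times> nat \<Rightarrow> 'd::finite" and k +
  fixes S :: "vtx list set"
  assumes positive_S: "\<forall>p\<in>S. positive_path k p"
    and terminals_covered: "terminals k \<subseteq> (\<Union>p\<in>S. set p)"
begin

definition end_column :: "vtx list \<Rightarrow> nat" where
  "end_column p = fst (last p)"

definition path_weight :: "vtx list \<Rightarrow> real" where
  "path_weight p =
    (if 1 \<le> end_column p \<and> end_column p < n
     then (lam (end_column p) - lam (Suc (end_column p))) / card {q\<in>S. end_column q = end_column p}
     else 0)"

definition level :: "nat \<Rightarrow> nat \<Rightarrow> real" where
  "level i j = lam n + (\<Sum>p\<in>S. path_weight p * of_bool (above_path p i j))"

definition realization :: "real ^ 'd" where
  "realization = (\<chi> t. if t \<in> e ` GC_index n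
      then level (fst (inv_into (GC_index n) e t)) (snd (inv_into (GC_index n) e t)) else 0)"

lemma finite_S: "finite S"
  using finite_positive_paths[of k] positive_S by (metis mem_Collect_eq rev_finite_subset subsetI)

lemma S_path_end:
  assumes "p \<in> S"
  shows "mono_path p" "last p \<in> terminals k" "last p = (end_column p, n - end_column p)"
    "end_column p \<le> n"
proof -
  show p: "mono_path p" "last p \<in> terminals k" using positive_S assms positive_path_iff by auto
  then have "fst (last p) + snd (last p) = n"
    using terminal_sum[of "fst (last p)" "snd (last p)" k] n_eq by simp
  then show "last p = (end_column p, n - end_column p)" "end_column p \<le> n"
    unfolding end_column_def by (cases "last p"; auto)+
qed

lemma end_column_partial_sum: "p \<in> S \<Longrightarrow> \<exists>l. end_column p = partial_sum k l"
  using S_path_end(2,3)[of p] unfolding terminals_eq by auto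

lemma terminal_is_last: "(c, n - c) \<in> terminals k \<Longrightarrow> \<exists>q\<in>S. last q = (c, n - c)"
  using terminals_covered positive_S positive_path_terminal_is_last by blast

lemma path_weight_pos:
  assumes "p \<in> S" "1 \<le> end_column p" "end_column p < n"
  shows "path_weight p > 0"
proof -
  have "lam (Suc (end_column p)) < lam (end_column p)"
    using end_column_partial_sum[OF assms(1)] lambda_of_type_less[OF lambda_type] assms(2,3) n_eq by metis
  moreover have "card {q\<in>S. end_column q = end_column p} > 0"
    using finite_S assms(1) by (auto simp: card_gt_0_iff)
  ultimately show ?thesis using assms by (simp add: path_weight_def)
qed

lemma path_weight_nonneg: "p \<in> S \<Longrightarrow> path_weight p \<ge> 0"
  using path_weight_pos[of p] by (force simp: path_weight_def)

lemma level_mono: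
  assumes "\<And>p. p \<in> S \<Longrightarrow> above_path p i j \<Longrightarrow> above_path p i' j'"
  shows "level i j \<le> level i' j'"
  unfolding level_def using path_weight_nonneg assms
  by (auto intro!: sum_mono mult_left_mono)

lemma level_neq_iff:
  assumes "\<And>p. p \<in> S \<Longrightarrow> above_path p i j \<Longrightarrow> above_path p i' j'"
  shows "level i' j' \<noteq> level i j \<longleftrightarrow>
    (\<exists>p\<in>S. path_weight p > 0 \<and> above_path p i' j' \<and> \<not> above_path p i j)"
proof -
  define f where "f p = path_weight p * of_bool (above_path p i' j') - path_weight p * of_bool (above_path p i j)" for p
  have f_nonneg: "f p \<ge> 0" if "p \<in> S" for p
    using path_weight_nonneg[OF that] assms[OF that] by (auto simp: f_def)
  have "level i' j' - level i j = (\<Sum>p\<in>S. f p)"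
    unfolding level_def f_def by (simp add: sum_subtractf)
  then have "level i' j' = level i j \<longleftrightarrow> (\<forall>p\<in>S. f p = 0)"
    using sum_nonneg_eq_0_iff[OF finite_S, of f] f_nonneg by auto
  moreover have "f p = 0 \<longleftrightarrow> \<not> (path_weight p > 0 \<and> above_path p i' j' \<and> \<not> above_path p i j)" if "p \<in> S" for p
    using path_weight_nonneg[OF that] assms[OF that] by (auto simp: f_def)
  ultimately show ?thesis by auto
qed

lemma path_weights_at_column:
  assumes "1 \<le> c" "c < n"
  shows "(\<Sum>p\<in>{q\<in>S. end_column q = c}. path_weight p) = lam c - lam (Suc c)"
proof (cases "{q\<in>S. end_column q = c} = {}")
  case True
  have "c \<noteq> partial_sum k l" for l
  proof
    assume c: "c = partial_sum k l"
    then have "l \<le> length k" using partial_sum_less_imp_less_length[of k l] assms n_eq by simp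
    then have "(c, n - c) \<in> terminals k" unfolding terminals_eq using c by auto
    then show False using terminal_is_last True by (force simp: end_column_def)
  qed
  then have "lam c = lam (Suc c)"
    using lambda_of_type_eq_Suc[OF lambda_type] assms n_eq by blast
  then show ?thesis unfolding True by simp
next
  case False
  then have "card {q\<in>S. end_column q = c} \<noteq> 0" using finite_S by simp
  moreover have "(\<Sum>p\<in>{q\<in>S. end_column q = c}. path_weight p) =
      card {q\<in>S. end_column q = c} * ((lam c - lam (Suc c)) / card {q\<in>S. end_column q = c})"
    using assms by (simp add: path_weight_def)
  ultimately show ?thesis by simp
qed

lemma above_path_antidiagonal:
  assumes p: "p \<in> S" and i: "1 \<le> i" "i \<le> n"
  shows "above_path p i (n + 1 - i) \<longleftrightarrow> i \<le> end_column p"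
proof
  assume "above_path p i (n + 1 - i)"
  then show "i \<le> end_column p"
    using not_above_path_beyond[OF S_path_end(1)[OF p]] S_path_end(3)[OF p] by (metis fst_conv not_le)
next
  assume "i \<le> end_column p"
  then show "above_path p i (n + 1 - i)"
    using above_path_over_end[OF S_path_end(1)[OF p]] S_path_end(3,4)[OF p] i by simp
qed

lemma level_boundary:
  assumes "1 \<le> i" "i \<le> n"
  shows "level i (n + 1 - i) = lam i"
proof -
  have "(\<Sum>p\<in>S. path_weight p * of_bool (above_path p i (n + 1 - i))) =
      (\<Sum>p\<in>{q\<in>S. i \<le> end_column q \<and> end_column q < n}. path_weight p)"
    using above_path_antidiagonal[OF _ assms] finite_S
    by (auto simp: sum.inter_filter[symmetric] path_weight_def intro!: sum.cong)
  also have "\<dots> = (\<Sum>c\<in>{i..<n}. \<Sum>p\<in>{q\<in>{q\<in>S. i \<le> end_column q \<and> end_column q < n}. end_column q = c}.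
      path_weight p)"
    by (rule sum.group[symmetric]) (use finite_S in auto)
  also have "\<dots> = (\<Sum>c\<in>{i..<n}. lam c - lam (Suc c))"
  proof (rule sum.cong[OF refl])
    fix c assume c: "c \<in> {i..<n}"
    then have "{q\<in>{q\<in>S. i \<le> end_column q \<and> end_column q < n}. end_column q = c} = {q\<in>S. end_column q = c}"
      by auto
    then show "(\<Sum>p\<in>{q\<in>{q\<in>S. i \<le> end_column q \<and> end_column q < n}. end_column q = c}. path_weight p) =
        lam c - lam (Suc c)"
      using path_weights_at_column[of c] c assms by simp
  qed
  also have "\<dots> = lam i - lam n"
    using sum_Suc_diff'[of i n "\<lambda>c. - lam c"] assms by (simp add: sum_negf)
  finally show ?thesis unfolding level_def by simp
qed

lemma coord_realization:
  assumes "p \<in> GC_index n \<union> boundary"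
  shows "coord realization p = level (fst p) (snd p)"
proof (cases "p \<in> GC_index n")
  case True
  then show ?thesis
    using inv_into_f_f[OF inj_e True] by (auto simp: GC_coord_def realization_def GC_index_iff)
next
  case False
  then have "1 \<le> fst p" "fst p \<le> n" "snd p = n + 1 - fst p" "fst p + snd p = n + 1"
    using assms by (auto simp: boundary_def)
  then show ?thesis using level_boundary by (simp add: GC_coord_def)
qed

lemma level_up: "level i j \<le> level i (Suc j)"
  by (intro level_mono above_path_Suc_height)

lemma level_right: "level (Suc i) j \<le> level i j"
  using above_path_prev_column S_path_end(1) by (intro level_mono) blast

lemma realization_in_polyhedron: "realization \<in> polyhedron"
  unfolding polyhedron_eq_GC_polytope GC_polytope_def
proof (intro CollectI conjI allI impI ballI)
  fix t assume "t \<notin> e ` GC_index n"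
  then show "realization $ t = 0" by (simp add: realization_def)
next
  fix ij assume ij: "ij \<in> GC_index n"
  obtain i j where ij_eq: "ij = (i, j)" by fastforce
  have "(i, j + 1) \<in> GC_index n \<union> boundary" "(i + 1, j) \<in> GC_index n \<union> boundary"
    using grid_step_index[of "(i, j)" True] grid_step_index[of "(i, j)" False] ij ij_eq
    by (auto simp: grid_step_def)
  then show "case ij of (i, j) \<Rightarrow>
      coord realization (i, j + 1) \<ge> coord realization (i, j) \<and>
      coord realization (i, j) \<ge> coord realization (i + 1, j)"
    using coord_realization ij ij_eq level_up[of i j] level_right[of i j] by auto
qed

lemma hor_edge_into_realization_iff:
  assumes "(a, b) \<in> GC_index n"
  shows "hor_edge_into n (tight realization) (a, b) \<longleftrightarrow>
    (\<exists>p\<in>S. path_weight p > 0 \<and> above_path p a (Suc b) \<and> \<not> above_path p a b)"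
proof -
  have "(a, Suc b) \<in> GC_index n \<union> boundary"
    using grid_step_index[OF assms, of True] by (simp add: grid_step_def)
  then have "hor_edge_into n (tight realization) (a, b) \<longleftrightarrow> level a (Suc b) \<noteq> level a b"
    using hor_edge_into_tight_iff[OF assms] coord_realization assms by auto
  also have "\<dots> \<longleftrightarrow> (\<exists>p\<in>S. path_weight p > 0 \<and> above_path p a (Suc b) \<and> \<not> above_path p a b)"
    by (intro level_neq_iff above_path_Suc_height)
  finally show ?thesis .
qed

lemma ver_edge_into_realization_iff:
  assumes "(a, b) \<in> GC_index n"
  shows "ver_edge_into n (tight realization) (a, b) \<longleftrightarrow>
    (\<exists>p\<in>S. path_weight p > 0 \<and> above_path p a b \<and> \<not> above_path p (Suc a) b)"
proof -
  have "(Suc a, b) \<in> GC_index n \<union> boundary"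
    using grid_step_index[OF assms, of False] by (simp add: grid_step_def)
  then have "ver_edge_into n (tight realization) (a, b) \<longleftrightarrow> level a b \<noteq> level (Suc a) b"
    using ver_edge_into_tight_iff[OF assms] coord_realization assms by auto
  also have "\<dots> \<longleftrightarrow> (\<exists>p\<in>S. path_weight p > 0 \<and> above_path p a b \<and> \<not> above_path p (Suc a) b)"
    using above_path_prev_column S_path_end(1) by (intro level_neq_iff) blast
  finally show ?thesis .
qed

lemma path_vertex_bound: "p \<in> S \<Longrightarrow> u \<in> set p \<Longrightarrow> fst u \<le> end_column p \<and> snd u \<le> n - end_column p"
  using mono_path_bounded[OF S_path_end(1)] S_path_end(3) by fastforce

lemma path_edges_subset_realization:
  assumes p: "p \<in> S" and uv: "(u, v) \<in> path_edges p"
  shows "(u, v) \<in> graph_edges realization"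
proof -
  obtain a b where u: "u = (a, b)" by fastforce
  have mp: "mono_path p" using S_path_end(1)[OF p] .
  have bound: "fst v \<le> end_column p" "snd v \<le> n - end_column p" "end_column p \<le> n"
    using path_vertex_bound[OF p] path_edges_in_set[OF uv] S_path_end(4)[OF p] by auto
  have "v = (Suc a, b) \<or> v = (a, Suc b)" using mono_path_edge_step[OF mp uv] u by simp
  then show ?thesis
  proof
    assume v: "v = (Suc a, b)"
    have "hor_edge_into n (tight realization) (Suc a, b)"
    proof (cases "b = 0")
      case False
      then have "(Suc a, b) \<in> GC_index n" "path_weight p > 0"
        using bound v path_weight_pos[OF p] by (auto simp: GC_index_iff)
      moreover have "above_path p (Suc a) (Suc b) \<and> \<not> above_path p (Suc a) b"
        using mono_path_horizontal_edge_iff[OF mp] uv u v by blast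
      ultimately show ?thesis using hor_edge_into_realization_iff p by blast
    qed (use bound v in simp)
    then show ?thesis using u v by (auto simp: face_graph_edges_def)
  next
    assume v: "v = (a, Suc b)"
    have "ver_edge_into n (tight realization) (a, Suc b)"
    proof (cases "a = 0")
      case False
      then have "(a, Suc b) \<in> GC_index n" "path_weight p > 0"
        using bound v path_weight_pos[OF p] by (auto simp: GC_index_iff)
      moreover have "above_path p a (Suc b) \<and> \<not> above_path p (Suc a) (Suc b)"
        using mono_path_vertical_edge_iff[OF mp] uv u v by blast
      ultimately show ?thesis using ver_edge_into_realization_iff p by blast
    qed (use bound v in simp)
    then show ?thesis using u v by (auto simp: face_graph_edges_def)
  qed
qed

lemma hor_edge_realization_on_path:
  assumes "hor_edge_into n (tight realization) (Suc a, b)"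
  shows "\<exists>p\<in>S. ((a, b), (Suc a, b)) \<in> path_edges p"
proof (cases "b = 0")
  case True
  obtain p where p: "p \<in> S" "last p = (n, 0)"
    using terminal_is_last[of n] terminals_axes(2)[of k] n_eq by auto
  have "above_path p (Suc a) (Suc b)"
    using above_path_over_end[OF S_path_end(1)[OF p(1)]] p(2) assms True by (simp add: hor_edge_into_def)
  moreover have "\<not> above_path p (Suc a) b" using True by (simp add: above_path_def)
  ultimately show ?thesis
    using mono_path_horizontal_edge_iff[OF S_path_end(1)[OF p(1)]] p(1) by blast
next
  case False
  then have "(Suc a, b) \<in> GC_index n" using assms by (auto simp: hor_edge_into_def GC_index_iff)
  then obtain p where "p \<in> S" "above_path p (Suc a) (Suc b)" "\<not> above_path p (Suc a) b"
    using hor_edge_into_realization_iff assms by blast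
  then show ?thesis using mono_path_horizontal_edge_iff[OF S_path_end(1)] by blast
qed

lemma ver_edge_realization_on_path:
  assumes "ver_edge_into n (tight realization) (a, Suc b)"
  shows "\<exists>p\<in>S. ((a, b), (a, Suc b)) \<in> path_edges p"
proof (cases "a = 0")
  case True
  obtain p where p: "p \<in> S" "last p = (0, n)"
    using terminal_is_last[of 0] terminals_axes(1)[of k] n_eq by auto
  have "above_path p a (Suc b)" using True by (simp add: above_path_def)
  moreover have "\<not> above_path p (Suc a) (Suc b)"
    using not_above_path_beyond[OF S_path_end(1)[OF p(1)]] p(2) True by simp
  moreover have "Suc b \<le> snd (last p)" using p(2) assms by (simp add: ver_edge_into_def)
  ultimately show ?thesis
    using mono_path_vertical_edge_iff[OF S_path_end(1)[OF p(1)]] p(1) by blast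
next
  case False
  then have "(a, Suc b) \<in> GC_index n" using assms by (auto simp: ver_edge_into_def GC_index_iff)
  then obtain p where p: "p \<in> S" "above_path p a (Suc b)" "\<not> above_path p (Suc a) (Suc b)"
    using ver_edge_into_realization_iff assms by blast
  have "Suc b \<le> snd (last p)"
  proof (rule ccontr)
    assume "\<not> Suc b \<le> snd (last p)"
    then have "Suc a \<le> fst (last p)" "snd (last p) < Suc b"
      using assms S_path_end(3,4)[OF p(1)] by (auto simp: ver_edge_into_def)
    then show False using above_path_over_end[OF S_path_end(1)[OF p(1)]] p(3) by blast
  qed
  then show ?thesis using mono_path_vertical_edge_iff[OF S_path_end(1)[OF p(1)]] p by blast
qed

lemma graph_edges_realization: "graph_edges realization = (\<Union>p\<in>S. path_edges p)"
proof
  show "graph_edges realization \<subseteq> (\<Union>p\<in>S. path_edges p)"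
  proof
    fix x assume "x \<in> graph_edges realization"
    then consider a b where "x = ((a, b), (Suc a, b))" "hor_edge_into n (tight realization) (Suc a, b)"
      | a b where "x = ((a, b), (a, Suc b))" "ver_edge_into n (tight realization) (a, Suc b)"
      unfolding face_graph_edges_def by blast
    then show "x \<in> (\<Union>p\<in>S. path_edges p)"
      by cases (use hor_edge_realization_on_path ver_edge_realization_on_path in blast)+
  qed
  show "(\<Union>p\<in>S. path_edges p) \<subseteq> graph_edges realization"
    using path_edges_subset_realization by auto
qed

lemma face_graph_realization:
  "face_graph n (tight realization) = ((\<Union>p\<in>S. set p), (\<Union>p\<in>S. path_edges p))"
proof -
  have "insert (0, 0) (snd ` (\<Union>p\<in>S. path_edges p)) = (\<Union>p\<in>S. set p)"
  proof
    obtain q where q: "q \<in> S" using terminals_covered terminals_axes(1)[of k] by blast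
    then have "(0, 0) \<in> set q" using mono_path_hd[OF S_path_end(1)[OF q]] hd_in_set by metis
    then show "insert (0, 0) (snd ` (\<Union>p\<in>S. path_edges p)) \<subseteq> (\<Union>p\<in>S. set p)"
      using q path_edges_in_set by fastforce
    show "(\<Union>p\<in>S. set p) \<subseteq> insert (0, 0) (snd ` (\<Union>p\<in>S. path_edges p))"
      using mono_path_set_subset[OF S_path_end(1)] by blast
  qed
  then show ?thesis unfolding face_graph_def graph_edges_realization by simp
qed

end

section \<open>The face lattice isomorphism\<close>

context gc_ladder
begin

lemma ladder_face_realized:
  assumes "g \<in> ladder_faces k"
  obtains x where "x \<in> polyhedron" "face_graph n (tight x) = g"
proof -
  obtain S where S: "\<forall>p\<in>S. positive_path k p" "terminals k \<subseteq> fst g"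
    "g = ((\<Union>p\<in>S. set p), (\<Union>p\<in>S. path_edges p))"
    using assms unfolding ladder_faces_def by auto
  interpret gc_realization n lam e k S
    using S gc_ladder_axioms by (simp add: gc_realization_def gc_realization_axioms_def)
  show thesis
    using that realization_in_polyhedron face_graph_realization S(3) by simp
qed

lemma face_graph_subgraph_iff:
  assumes "F face_of polyhedron" "F \<noteq> {}" "F' face_of polyhedron" "F' \<noteq> {}"
  shows "F \<subseteq> F' \<longleftrightarrow> subgraph (face_graph n (tight_on F)) (face_graph n (tight_on F'))"
proof -
  have "tight_on F \<subseteq> GC_index n \<times> UNIV" "tight_on F' \<subseteq> GC_index n \<times> UNIV"
    using tight_on_subset assms(2,4) by auto
  then show ?thesis
    using face_subset_iff_tight_on[OF assms] subgraph_face_graph_iff by simp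
qed

lemma graph_dim_face_graph_tight_on:
  assumes "F face_of polyhedron" "F \<noteq> {}"
  shows "graph_dim (face_graph n (tight_on F)) = aff_dim F"
proof -
  obtain y where y: "y \<in> F" "tight y = tight_on F" "F = face_at y"
    using nonempty_face_eq_face_at[OF assms] .
  then have y_poly: "y \<in> polyhedron" using assms(1) face_of_imp_subset by blast
  have "graph_dim (face_graph n (tight_on F)) = int (card (corners y))"
    using graph_dim_face_graph_tight[OF y_poly] y(2) by simp
  also have "\<dots> = int (dim (face_directions y))"
    using dim_face_directions[OF y_poly] by simp
  also have "\<dots> = aff_dim F"
    using aff_dim_face_at[OF y_poly] y(3) by simp
  finally show ?thesis .
qed

lemma bij_betw_face_graph_tight_on:
  "bij_betw (\<lambda>F. face_graph n (tight_on F)) {F. F face_of polyhedron \<and> F \<noteq> {}} (ladder_faces k)"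
proof (intro bij_betwI')
  fix F F' assume F: "F \<in> {F. F face_of polyhedron \<and> F \<noteq> {}}" "F' \<in> {F. F face_of polyhedron \<and> F \<noteq> {}}"
  show "face_graph n (tight_on F) = face_graph n (tight_on F') \<longleftrightarrow> F = F'"
  proof
    assume "face_graph n (tight_on F) = face_graph n (tight_on F')"
    then have "F \<subseteq> F'" "F' \<subseteq> F"
      using face_graph_subgraph_iff[of F F'] face_graph_subgraph_iff[of F' F] F
      by (simp_all add: subgraph_def)
    then show "F = F'" by blast
  qed simp
next
  fix F assume F: "F \<in> {F. F face_of polyhedron \<and> F \<noteq> {}}"
  then obtain y where "y \<in> F" "tight y = tight_on F"
    using nonempty_face_eq_face_at by blast
  then show "face_graph n (tight_on F) \<in> ladder_faces k"
    using face_graph_tight_in_ladder_faces F face_of_imp_subset by fastforce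
next
  fix g assume "g \<in> ladder_faces k"
  then obtain x where x: "x \<in> polyhedron" "face_graph n (tight x) = g"
    using ladder_face_realized by blast
  then show "\<exists>F\<in>{F. F face_of polyhedron \<and> F \<noteq> {}}. g = face_graph n (tight_on F)"
    using face_at_face_of self_mem_face_at[OF x(1)] tight_on_face_at[OF x(1)]
    by (intro bexI[of _ "face_at x"]) auto
qed

end

theorem theorem1p1:
  fixes k :: "nat list" and n :: nat and lam :: "nat \<Rightarrow> real"
    and e :: "nat \<times> nat \<Rightarrow> 'd::finite"
  assumes "\<forall>ki \<in> set k. ki > 0"
    and "n = sum_list k"
    and "lambda_of_type k lam"
    and "inj_on e (GC_index n)"
  shows "\<exists>\<phi>. bij_betw \<phi> (nonempty_faces (GC_polytope n lam e)) (ladder_faces k) \<and>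
           (\<forall>F \<in> nonempty_faces (GC_polytope n lam e). \<forall>F' \<in> nonempty_faces (GC_polytope n lam e).
               F \<subseteq> F' \<longleftrightarrow> subgraph (\<phi> F) (\<phi> F')) \<and>
           (\<forall>F \<in> nonempty_faces (GC_polytope n lam e). graph_dim (\<phi> F) = aff_dim F)"
proof -
  interpret gc_ladder n lam e k
    using assms(2-4) by (simp add: gc_ladder_def gc_polytope_def gc_ladder_axioms_def)
  have faces: "nonempty_faces (GC_polytope n lam e) = {F. F face_of polyhedron \<and> F \<noteq> {}}"
    by (simp add: nonempty_faces_def polyhedron_eq_GC_polytope)
  show ?thesis
    unfolding faces
    using bij_betw_face_graph_tight_on face_graph_subgraph_iff graph_dim_face_graph_tight_on
    by (intro exI[of _ "\<lambda>F. face_graph n (tight_on F)"]) auto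
qed

end
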